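(* Let $G$ be a group which is the semidirect product of a normal subgroup $A$ and a subgroup $B$ (so $G=\langle A,B\rangle$, $A\trianglelefteq G$, $A\cap B=1$), with action $\theta:B\to \mathrm{Aut}(A)$, $\theta(b)(a)=a^b=b^{-1}ab$. Let $1\to R_1\to F_1\xrightarrow{\nu_1} A\to 1$ and $1\to R_2\to F_2\xrightarrow{\nu_2} B\to 1$ be free presentations of $A$ and $B$ (so $F_1,F_2$ are free groups, $\nu_1,\nu_2$ are epimorphisms with kernels $R_1,R_2$). Let $F=F_1*F_2$ be the free product, let $$S=\big\langle f_1^{-1}\overline{f_1}\,[f_2,f_1]\ \big|\ f_1,\overline{f_1}\in F_1,\ f_2\in F_2,\ \nu_1(\overline{f_1})=\theta(\nu_2 f_2)(\nu_1 f_1)\big\rangle^F,$$ and let $R=R_1^F R_2^F S$ (so that $1\to R\to F\to G\to 1$ is a free presentation of $G$). For $c\ge 1$ let $$\textstyle\prod[R_2,F_1,F_2]_c=\big\langle [r_2,f_1,\ldots,f_c]\ \big|\ r_2\in R_2,\ f_i\in F_1\cup F_2\ (1\le i\le c),\ f_k\in F_1 \text{ for some } k\big\rangle^F,$$ so that in particular $\prod[R_2,F_1,F_2]_1=[R_2,F_1]$. Then: (i) $R_1$ and $[R_2,F_1]$ are subgroups of $S$; (ii) $R=R_2S$; (iii) $R\cap\gamma_{c+1}(F)=(R_2\cap\gamma_{c+1}(F_2))(S\cap\gamma_{c+1}(F))$ for all $c\ge 1$; (iv) $[R,{}_cF]=[R_2,{}_cF_2]\,\prod[R_2,F_1,F_2]_c\,[S,{}_cF]$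 for all $c\ge 1$.
   Context: Commutators are $[x,y]=x^{-1}y^{-1}xy$ and are left-normed: $[x_1,\ldots,x_{n+1}]=[[x_1,\ldots,x_n],x_{n+1}]$. For a subset $X$ of $F$, $X^F$ or $\langle X\rangle^F$ denotes the normal closure of (the subgroup generated by) $X$ in $F$. $\gamma_{c+1}(F)$ is the $(c+1)$-st term of the lower central series of $F$, and $[R,{}_cF]=[R,F,\ldots,F]$ with $c$ copies of $F$. *)

theory Defs
  imports "HOL-Algebra.Algebra"
begin

definition comm :: "('a, 'b) monoid_scheme \<Rightarrow> 'a \<Rightarrow> 'a \<Rightarrow> 'a" where
  "comm G x y = inv\<^bsub>G\<^esub> x \<otimes>\<^bsub>G\<^esub> inv\<^bsub>G\<^esub> y \<otimes>\<^bsub>G\<^esub> x \<otimes>\<^bsub>G\<^esub> y"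

definition lcomm :: "('a, 'b) monoid_scheme \<Rightarrow> 'a \<Rightarrow> 'a list \<Rightarrow> 'a" where
  "lcomm G x ys = foldl (comm G) x ys"

definition comm_subgroup :: "('a, 'b) monoid_scheme \<Rightarrow> 'a set \<Rightarrow> 'a set \<Rightarrow> 'a set" where
  "comm_subgroup G H K = generate G {comm G h k | h k. h \<in> H \<and> k \<in> K}"

fun comm_iter :: "('a, 'b) monoid_scheme \<Rightarrow> 'a set \<Rightarrow> nat \<Rightarrow> 'a set" where
  "comm_iter G H 0 = H"
| "comm_iter G H (Suc n) = comm_subgroup G (comm_iter G H n) (carrier G)"

definition lower_central :: "('a, 'b) monoid_scheme \<Rightarrow> nat \<Rightarrow> 'a set" where
  "lower_central G n = comm_iter G (carrier G) (n - 1)"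

definition normal_closure :: "('a, 'b) monoid_scheme \<Rightarrow> 'a set \<Rightarrow> 'a set" where
  "normal_closure G Y = generate G {inv\<^bsub>G\<^esub> g \<otimes>\<^bsub>G\<^esub> y \<otimes>\<^bsub>G\<^esub> g | g y. g \<in> carrier G \<and> y \<in> Y}"

text \<open>Words over a set of letters (True = letter, False = inverse letter).\<close>
definition word_eval :: "('a, 'b) monoid_scheme \<Rightarrow> (bool \<times> 'a) list \<Rightarrow> 'a" where
  "word_eval G w = foldr (\<lambda>(e, x) acc. (if e then x else inv\<^bsub>G\<^esub> x) \<otimes>\<^bsub>G\<^esub> acc) w \<one>\<^bsub>G\<^esub>"

definition reduced_word :: "(bool \<times> 'a) list \<Rightarrow> bool" where
  "reduced_word w \<longleftrightarrow> (\<forall>i. Suc i < length w \<longrightarrow>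
       \<not> (snd (w ! i) = snd (w ! Suc i) \<and> fst (w ! i) \<noteq> fst (w ! Suc i)))"

definition free_group_on :: "('a, 'b) monoid_scheme \<Rightarrow> 'a set \<Rightarrow> bool" where
  "free_group_on F Y \<longleftrightarrow> group F \<and> Y \<subseteq> carrier F \<and> generate F Y = carrier F \<and>
     (\<forall>w. w \<noteq> [] \<and> set (map snd w) \<subseteq> Y \<and> reduced_word w \<longrightarrow> word_eval F w \<noteq> \<one>\<^bsub>F\<^esub>)"

definition free_group :: "('a, 'b) monoid_scheme \<Rightarrow> bool" where
  "free_group F \<longleftrightarrow> (\<exists>Y. free_group_on F Y)"

text \<open>F is the (internal) free product F1 * F2: F1, F2 subgroups with trivial intersection,
  generating F, and every nonempty alternating product of nontrivial factors is nontrivial.\<close>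
definition free_product :: "('a, 'b) monoid_scheme \<Rightarrow> 'a set \<Rightarrow> 'a set \<Rightarrow> bool" where
  "free_product F F1 F2 \<longleftrightarrow> group F \<and> subgroup F1 F \<and> subgroup F2 F \<and>
     F1 \<inter> F2 = {\<one>\<^bsub>F\<^esub>} \<and> generate F (F1 \<union> F2) = carrier F \<and>
     (\<forall>gs. gs \<noteq> [] \<and> set gs \<subseteq> (F1 \<union> F2) - {\<one>\<^bsub>F\<^esub>} \<and>
        (\<forall>i. Suc i < length gs \<longrightarrow> \<not> (gs ! i \<in> F1 \<and> gs ! Suc i \<in> F1) \<and>
                                   \<not> (gs ! i \<in> F2 \<and> gs ! Suc i \<in> F2))
        \<longrightarrow> foldr (\<otimes>\<^bsub>F\<^esub>) gs \<one>\<^bsub>F\<^esub> \<noteq> \<one>\<^bsub>F\<^esub>)"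

end

theory Submission
  imports Defs
begin

text \<open>
  The relators generating \<open>S\<close> say that, modulo \<open>S\<close>, conjugation by \<open>f\<^sub>2 \<in> F\<^sub>2\<close> acts on \<open>F\<^sub>1\<close> as
  \<open>\<theta>(\<nu>\<^sub>2 f\<^sub>2)\<close> acts on \<open>A\<close>. Taking \<open>f\<^sub>2 = 1\<close> gives \<open>R\<^sub>1 \<subseteq> S\<close>, and taking \<open>f\<^sub>2 \<in> R\<^sub>2\<close> gives
  \<open>[R\<^sub>2, F\<^sub>1] \<subseteq> S\<close>. As \<open>R\<^sub>2\<close> is normalised by \<open>F\<^sub>2\<close> and \<open>r\<^sup>f = r[r, f]\<close>, the product \<open>R\<^sub>2S\<close> is
  already normal in \<open>F\<close>, so \<open>R = R\<^sub>2S\<close>.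

  Because \<open>F\<close> is the free product of \<open>F\<^sub>1\<close> and \<open>F\<^sub>2\<close>, there is a retraction \<open>\<pi> : F \<rightarrow> F\<^sub>2\<close> killing
  \<open>F\<^sub>1\<close>; it kills \<open>S\<close>, fixes \<open>R\<^sub>2\<close> and maps \<open>\<gamma>\<^sub>c\<^sub>+\<^sub>1(F)\<close> into \<open>\<gamma>\<^sub>c\<^sub>+\<^sub>1(F\<^sub>2)\<close>. Hence
  \<open>rs \<in> \<gamma>\<^sub>c\<^sub>+\<^sub>1(F)\<close> with \<open>r \<in> R\<^sub>2\<close>, \<open>s \<in> S\<close> forces \<open>r = \<pi>(rs) \<in> \<gamma>\<^sub>c\<^sub>+\<^sub>1(F\<^sub>2)\<close>, which gives (iii).

  For (iv), normality of \<open>S\<close> gives \<open>[R\<^sub>2S, \<^sub>cF] = [R\<^sub>2, \<^sub>cF][S, \<^sub>cF]\<close>, and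
  \<open>[R\<^sub>2, \<^sub>cF] \<subseteq> [R\<^sub>2, \<^sub>cF\<^sub>2] \<Prod>[R\<^sub>2, F\<^sub>1, F\<^sub>2]\<^sub>c\<close> by induction on \<open>c\<close>: the right-hand side is normal by the same
  \<open>r\<^sup>f = r[r, f]\<close> argument, since \<open>[R\<^sub>2, \<^sub>cF\<^sub>2]\<close> is generated by the simple commutators
  \<open>[r, g\<^sub>1, \<dots>, g\<^sub>c]\<close>, whose commutators with \<open>F\<^sub>1\<close> are generators of \<open>\<Prod>[R\<^sub>2, F\<^sub>1, F\<^sub>2]\<^sub>c\<^sub>+\<^sub>1\<close>.
\<close>

section \<open>Commutator identities and conjugation invariance\<close>

lemma lcomm_Nil [simp]: "lcomm G x [] = x"
  by (simp add: lcomm_def)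

lemma lcomm_snoc [simp]: "lcomm G x (fs @ [f]) = comm G (lcomm G x fs) f"
  by (simp add: lcomm_def)

definition conj_invariant :: "('a, 'b) monoid_scheme \<Rightarrow> 'a set \<Rightarrow> 'a set \<Rightarrow> bool" where
  "conj_invariant G H N \<longleftrightarrow> (\<forall>h\<in>H. \<forall>x\<in>N. inv\<^bsub>G\<^esub> h \<otimes>\<^bsub>G\<^esub> x \<otimes>\<^bsub>G\<^esub> h \<in> N)"

lemma conj_invariantI:
  "(\<And>h x. h \<in> H \<Longrightarrow> x \<in> N \<Longrightarrow> inv\<^bsub>G\<^esub> h \<otimes>\<^bsub>G\<^esub> x \<otimes>\<^bsub>G\<^esub> h \<in> N) \<Longrightarrow> conj_invariant G H N"
  by (simp add: conj_invariant_def)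

lemma conj_invariantD:
  "conj_invariant G H N \<Longrightarrow> h \<in> H \<Longrightarrow> x \<in> N \<Longrightarrow> inv\<^bsub>G\<^esub> h \<otimes>\<^bsub>G\<^esub> x \<otimes>\<^bsub>G\<^esub> h \<in> N"
  by (simp add: conj_invariant_def)

lemma conj_invariant_mono: "conj_invariant G H N \<Longrightarrow> H' \<subseteq> H \<Longrightarrow> conj_invariant G H' N"
  by (auto simp: conj_invariant_def)

context group
begin

lemma inv_mult_cancel_left [simp]: "\<lbrakk>x \<in> carrier G; y \<in> carrier G\<rbrakk> \<Longrightarrow> inv x \<otimes> (x \<otimes> y) = y"
  by (simp add: m_assoc [symmetric])

lemma mult_inv_cancel_left [simp]: "\<lbrakk>x \<in> carrier G; y \<in> carrier G\<rbrakk> \<Longrightarrow> x \<otimes> (inv x \<otimes> y) = y"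
  by (simp add: m_assoc [symmetric])

lemma comm_closed [simp]: "x \<in> carrier G \<Longrightarrow> y \<in> carrier G \<Longrightarrow> comm G x y \<in> carrier G"
  by (simp add: comm_def)

lemma comm_one_left [simp]: "x \<in> carrier G \<Longrightarrow> comm G \<one> x = \<one>"
  by (simp add: comm_def m_assoc)

lemma comm_one_right [simp]: "x \<in> carrier G \<Longrightarrow> comm G x \<one> = \<one>"
  by (simp add: comm_def m_assoc)

lemma comm_mult_left:
  "\<lbrakk>x \<in> carrier G; y \<in> carrier G; z \<in> carrier G\<rbrakk>
   \<Longrightarrow> comm G (x \<otimes> y) z = inv y \<otimes> comm G x z \<otimes> y \<otimes> comm G y z"
  by (simp add: comm_def m_assoc inv_mult_group)

lemma comm_mult_right:
  "\<lbrakk>x \<in> carrier G; y \<in> carrier G; z \<in> carrier G\<rbrakk>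
   \<Longrightarrow> comm G x (y \<otimes> z) = comm G x z \<otimes> inv z \<otimes> comm G x y \<otimes> z"
  by (simp add: comm_def m_assoc inv_mult_group)

lemma comm_inv_left:
  "\<lbrakk>x \<in> carrier G; z \<in> carrier G\<rbrakk> \<Longrightarrow> comm G (inv x) z = x \<otimes> inv (comm G x z) \<otimes> inv x"
  by (simp add: comm_def m_assoc inv_mult_group)

lemma comm_inv_right:
  "\<lbrakk>x \<in> carrier G; z \<in> carrier G\<rbrakk> \<Longrightarrow> comm G x (inv z) = z \<otimes> inv (comm G x z) \<otimes> inv z"
  by (simp add: comm_def m_assoc inv_mult_group)

lemma inv_comm: "\<lbrakk>x \<in> carrier G; y \<in> carrier G\<rbrakk> \<Longrightarrow> inv (comm G x y) = comm G y x"
  by (simp add: comm_def m_assoc inv_mult_group)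

lemma comm_conj:
  "\<lbrakk>x \<in> carrier G; y \<in> carrier G; g \<in> carrier G\<rbrakk>
   \<Longrightarrow> inv g \<otimes> comm G x y \<otimes> g = comm G (inv g \<otimes> x \<otimes> g) (inv g \<otimes> y \<otimes> g)"
  by (simp add: comm_def m_assoc inv_mult_group)

lemma conj_eq_mult_comm: "\<lbrakk>x \<in> carrier G; g \<in> carrier G\<rbrakk> \<Longrightarrow> inv g \<otimes> x \<otimes> g = x \<otimes> comm G x g"
  by (simp add: comm_def m_assoc)

lemma lcomm_closed: "\<lbrakk>x \<in> carrier G; set fs \<subseteq> carrier G\<rbrakk> \<Longrightarrow> lcomm G x fs \<in> carrier G"
  by (induction fs rule: rev_induct) auto

lemma lcomm_conj:
  assumes "g \<in> carrier G" "x \<in> carrier G" "set fs \<subseteq> carrier G"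
  shows "inv g \<otimes> lcomm G x fs \<otimes> g = lcomm G (inv g \<otimes> x \<otimes> g) (map (\<lambda>f. inv g \<otimes> f \<otimes> g) fs)"
  using assms(3) by (induction fs rule: rev_induct) (simp_all add: assms comm_conj lcomm_closed)

lemma normal_iff_conj_invariant: "N \<lhd> G \<longleftrightarrow> subgroup N G \<and> conj_invariant G (carrier G) N"
  unfolding conj_invariant_def
  by (metis inv_closed inv_inv normal_imp_subgroup normal.inv_op_closed1 normal_invI)

lemma normal_conj_invariant: "H \<subseteq> carrier G \<Longrightarrow> N \<lhd> G \<Longrightarrow> conj_invariant G H N"
  using normal_iff_conj_invariant conj_invariant_mono by blast

end

lemma set_mult_memI: "h \<in> H \<Longrightarrow> k \<in> K \<Longrightarrow> h \<otimes>\<^bsub>G\<^esub> k \<in> H <#>\<^bsub>G\<^esub> K"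
  by (auto simp: set_mult_def)

lemma set_mult_memE:
  assumes "x \<in> H <#>\<^bsub>G\<^esub> K" obtains h k where "h \<in> H" "k \<in> K" "x = h \<otimes>\<^bsub>G\<^esub> k"
  using assms by (auto simp: set_mult_def)

context group
begin

lemma subgroup_set_mult_normal: "subgroup H G \<Longrightarrow> N \<lhd> G \<Longrightarrow> subgroup (H <#> N) G"
  by (metis commut_normal second_isomorphism_grp.normal_set_mult_subgroup
      second_isomorphism_grp_axioms.intro second_isomorphism_grp.intro)

lemma set_mult_subset_subgroup: "\<lbrakk>subgroup Q G; H \<subseteq> Q; K \<subseteq> Q\<rbrakk> \<Longrightarrow> H <#> K \<subseteq> Q"
  by (auto simp: set_mult_def intro: subgroup.m_closed)

lemma subset_set_mult_left: "subgroup K G \<Longrightarrow> H \<subseteq> carrier G \<Longrightarrow> H \<subseteq> H <#> K"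
  by (force simp: set_mult_def dest: subgroup.one_closed)

lemma subset_set_mult_right: "subgroup H G \<Longrightarrow> K \<subseteq> carrier G \<Longrightarrow> K \<subseteq> H <#> K"
  by (force simp: set_mult_def dest: subgroup.one_closed)

lemma conj_invariant_generate:
  assumes "Z \<subseteq> carrier G" "H \<subseteq> carrier G" "conj_invariant G H Z"
  shows "conj_invariant G H (generate G Z)"
proof (rule conj_invariantI)
  fix h y assume h: "h \<in> H" and "y \<in> generate G Z"
  from this(2) show "inv h \<otimes> y \<otimes> h \<in> generate G Z"
  proof (induction rule: generate.induct)
    case one
    have "h \<in> carrier G" using h assms(2) by blast
    then show ?case by (simp add: generate.one)
  next
    case (incl z)
    then show ?case using h assms(3) by (auto intro: generate.incl conj_invariantD)
  next
    case (inv z)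
    have "z \<in> carrier G" "h \<in> carrier G" using inv h assms(1,2) by auto
    then have "inv h \<otimes> inv z \<otimes> h = inv (inv h \<otimes> z \<otimes> h)"
      by (simp add: inv_mult_group m_assoc)
    then show ?case
      using inv h assms by (auto intro: generate_m_inv_closed generate.incl conj_invariantD)
  next
    case (eng a b)
    have "a \<in> carrier G" "b \<in> carrier G" "h \<in> carrier G"
      using eng h generate_in_carrier[OF assms(1)] assms(2) by auto
    then have "inv h \<otimes> (a \<otimes> b) \<otimes> h = (inv h \<otimes> a \<otimes> h) \<otimes> (inv h \<otimes> b \<otimes> h)"
      by (simp add: m_assoc)
    then show ?case using eng by (auto intro: generate.eng)
  qed
qed

lemma normal_if_conj_invariant_generators:
  assumes N: "subgroup N G" and gens: "gens \<subseteq> carrier G" "generate G gens = carrier G"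
    and gens_inv: "\<And>x. x \<in> gens \<Longrightarrow> inv x \<in> gens" and "conj_invariant G gens N"
  shows "N \<lhd> G"
proof -
  define W where "W = {g \<in> carrier G. \<forall>n\<in>N. inv g \<otimes> n \<otimes> g \<in> N \<and> g \<otimes> n \<otimes> inv g \<in> N}"
  have N_carrier: "\<And>n. n \<in> N \<Longrightarrow> n \<in> carrier G" by (rule subgroup.mem_carrier[OF N])
  have "subgroup W G"
  proof (rule subgroupI)
    show "W \<subseteq> carrier G" "W \<noteq> {}"
      using N_carrier by (auto simp: W_def intro!: exI[of _ \<one>])
  next
    fix a assume "a \<in> W"
    then show "inv a \<in> W" by (simp add: W_def)
  next
    fix a b assume a: "a \<in> W" and b: "b \<in> W"
    have "inv (a \<otimes> b) \<otimes> n \<otimes> (a \<otimes> b) = inv b \<otimes> (inv a \<otimes> n \<otimes> a) \<otimes> b"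
      and "a \<otimes> b \<otimes> n \<otimes> inv (a \<otimes> b) = a \<otimes> (b \<otimes> n \<otimes> inv b) \<otimes> inv a" if "n \<in> N" for n
      using a b that N_carrier by (auto simp: W_def inv_mult_group m_assoc)
    then show "a \<otimes> b \<in> W" using a b by (simp add: W_def)
  qed
  moreover have "gens \<subseteq> W"
  proof
    fix x assume x: "x \<in> gens"
    then have "x \<otimes> n \<otimes> inv x \<in> N" if "n \<in> N" for n
      using conj_invariantD[OF assms(5) gens_inv[OF x] that] gens(1) by auto
    then show "x \<in> W" using x gens(1) conj_invariantD[OF assms(5) x] by (auto simp: W_def)
  qed
  ultimately have "carrier G \<subseteq> W" using generate_subgroup_incl gens by metis
  then show ?thesis
    using N by (auto simp: normal_iff_conj_invariant conj_invariant_def W_def)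
qed

end

section \<open>Normal closures, commutator subgroups and relative commutator series\<close>

fun rel_comm_iter :: "('a, 'b) monoid_scheme \<Rightarrow> 'a set \<Rightarrow> 'a set \<Rightarrow> nat \<Rightarrow> 'a set" where
  "rel_comm_iter G Z K 0 = Z"
| "rel_comm_iter G Z K (Suc n) = comm_subgroup G (rel_comm_iter G Z K n) K"

lemma comm_iter_eq_rel_comm_iter: "comm_iter G Z n = rel_comm_iter G Z (carrier G) n"
  by (induction n) auto

lemma comm_subgroup_incl: "h \<in> H \<Longrightarrow> k \<in> K \<Longrightarrow> comm G h k \<in> comm_subgroup G H K"
  unfolding comm_subgroup_def by (blast intro: generate.incl)

lemma lcomm_in_rel_comm_iter:
  "x \<in> Z \<Longrightarrow> set fs \<subseteq> K \<Longrightarrow> lcomm G x fs \<in> rel_comm_iter G Z K (length fs)"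
  by (induction fs rule: rev_induct) (auto intro: comm_subgroup_incl)

context group
begin

lemma normal_closure_normal: "Y \<subseteq> carrier G \<Longrightarrow> normal_closure G Y \<lhd> G"
  unfolding normal_closure_def
proof (rule normal_generateI)
  fix h g assume Y: "Y \<subseteq> carrier G"
    and "h \<in> {inv g \<otimes> y \<otimes> g | g y. g \<in> carrier G \<and> y \<in> Y}" and g: "g \<in> carrier G"
  then obtain g' y where h: "h = inv g' \<otimes> y \<otimes> g'" "g' \<in> carrier G" "y \<in> Y" by blast
  then have "g \<otimes> h \<otimes> inv g = inv (g' \<otimes> inv g) \<otimes> y \<otimes> (g' \<otimes> inv g)"
    using Y g by (auto simp: m_assoc inv_mult_group)
  then show "g \<otimes> h \<otimes> inv g \<in> {inv g \<otimes> y \<otimes> g | g y. g \<in> carrier G \<and> y \<in> Y}"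
    using h g by blast
qed auto

lemma normal_closure_incl:
  assumes "Y \<subseteq> carrier G" "y \<in> Y" shows "y \<in> normal_closure G Y"
proof -
  have "y = inv \<one> \<otimes> y \<otimes> \<one>" using assms by auto
  then show ?thesis unfolding normal_closure_def
    using assms(2) by (blast intro: generate.incl)
qed

lemma normal_closure_minimal:
  assumes N: "N \<lhd> G" and "Y \<subseteq> N" shows "normal_closure G Y \<subseteq> N"
  unfolding normal_closure_def
proof (rule generate_subgroup_incl[OF _ normal_imp_subgroup[OF N]])
  show "{inv g \<otimes> y \<otimes> g | g y. g \<in> carrier G \<and> y \<in> Y} \<subseteq> N"
    using normal.inv_op_closed1[OF N] assms(2) by blast
qed

lemma comm_subgroup_is_subgroup:
  "H \<subseteq> carrier G \<Longrightarrow> K \<subseteq> carrier G \<Longrightarrow> subgroup (comm_subgroup G H K) G"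
  unfolding comm_subgroup_def by (rule generate_is_subgroup) (blast intro: comm_closed)

lemma comm_subgroup_minimal:
  "\<lbrakk>subgroup Q G; \<And>h k. h \<in> H \<Longrightarrow> k \<in> K \<Longrightarrow> comm G h k \<in> Q\<rbrakk> \<Longrightarrow> comm_subgroup G H K \<subseteq> Q"
  unfolding comm_subgroup_def by (rule generate_subgroup_incl) auto

lemma comm_subgroup_mono:
  "H \<subseteq> H' \<Longrightarrow> K \<subseteq> K' \<Longrightarrow> comm_subgroup G H K \<subseteq> comm_subgroup G H' K'"
  unfolding comm_subgroup_def by (rule mono_generate) blast

lemma comm_subgroup_subset:
  assumes Q: "subgroup Q G" and "H \<subseteq> Q" "K \<subseteq> Q" shows "comm_subgroup G H K \<subseteq> Q"
proof (rule comm_subgroup_minimal[OF Q])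
  fix h k assume "h \<in> H" "k \<in> K"
  then have "h \<in> Q" "k \<in> Q" using assms by auto
  then show "comm G h k \<in> Q"
    unfolding comm_def by (simp add: subgroup.m_closed[OF Q] subgroup.m_inv_closed[OF Q])
qed

lemma conj_invariant_comm_subgroup:
  assumes "H \<subseteq> carrier G" "A \<subseteq> carrier G" "B \<subseteq> carrier G"
    and "conj_invariant G H A" "conj_invariant G H B"
  shows "conj_invariant G H (comm_subgroup G A B)"
  unfolding comm_subgroup_def
proof (rule conj_invariant_generate)
  show "{comm G a b | a b. a \<in> A \<and> b \<in> B} \<subseteq> carrier G" using assms(2,3) by (blast intro: comm_closed)
  show "conj_invariant G H {comm G a b | a b. a \<in> A \<and> b \<in> B}"
  proof (rule conj_invariantI)
    fix h z assume "h \<in> H" "z \<in> {comm G a b | a b. a \<in> A \<and> b \<in> B}"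
    then obtain a b where ab: "z = comm G a b" "a \<in> A" "b \<in> B" by blast
    have "h \<in> carrier G" "a \<in> carrier G" "b \<in> carrier G" using ab \<open>h \<in> H\<close> assms(1-3) by auto
    then have "inv h \<otimes> z \<otimes> h = comm G (inv h \<otimes> a \<otimes> h) (inv h \<otimes> b \<otimes> h)"
      by (simp add: ab(1) comm_conj)
    moreover have "inv h \<otimes> a \<otimes> h \<in> A" "inv h \<otimes> b \<otimes> h \<in> B"
      using ab(2,3) \<open>h \<in> H\<close> conj_invariantD[OF assms(4)] conj_invariantD[OF assms(5)] by auto
    ultimately show "inv h \<otimes> z \<otimes> h \<in> {comm G a b | a b. a \<in> A \<and> b \<in> B}" by blast
  qed
qed (rule assms(1))

lemma subgroup_comm_left_in:
  assumes H: "subgroup H G" and N: "subgroup N G" "conj_invariant G H N" and K: "K \<subseteq> carrier G"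
  shows "subgroup {y \<in> H. \<forall>f\<in>K. comm G y f \<in> N} G"
proof (rule subgroupI)
  show "{y \<in> H. \<forall>f\<in>K. comm G y f \<in> N} \<subseteq> carrier G" using subgroup.subset[OF H] by blast
  have "\<one> \<in> {y \<in> H. \<forall>f\<in>K. comm G y f \<in> N}"
    using K subgroup.one_closed[OF H] subgroup.one_closed[OF N(1)] by auto
  then show "{y \<in> H. \<forall>f\<in>K. comm G y f \<in> N} \<noteq> {}" by blast
next
  fix a assume a: "a \<in> {y \<in> H. \<forall>f\<in>K. comm G y f \<in> N}"
  have inv_a: "inv a \<in> H" using a subgroup.m_inv_closed[OF H] by blast
  have "comm G (inv a) f \<in> N" if f: "f \<in> K" for f
  proof -
    have "a \<in> carrier G" "f \<in> carrier G" using a f K subgroup.subset[OF H] by auto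
    then have "comm G (inv a) f = inv (inv a) \<otimes> inv (comm G a f) \<otimes> inv a"
      by (simp add: comm_inv_left)
    moreover have "inv (comm G a f) \<in> N" using a f subgroup.m_inv_closed[OF N(1)] by blast
    ultimately show ?thesis using conj_invariantD[OF N(2) inv_a] by simp
  qed
  then show "inv a \<in> {y \<in> H. \<forall>f\<in>K. comm G y f \<in> N}" using inv_a by blast
next
  fix a b assume a: "a \<in> {y \<in> H. \<forall>f\<in>K. comm G y f \<in> N}" and b: "b \<in> {y \<in> H. \<forall>f\<in>K. comm G y f \<in> N}"
  have "comm G (a \<otimes> b) f \<in> N" if f: "f \<in> K" for f
  proof -
    have "a \<in> carrier G" "b \<in> carrier G" "f \<in> carrier G" using a b f K subgroup.subset[OF H] by auto
    then have "comm G (a \<otimes> b) f = inv b \<otimes> comm G a f \<otimes> b \<otimes> comm G b f"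
      by (rule comm_mult_left)
    moreover have "inv b \<otimes> comm G a f \<otimes> b \<in> N" using a b f conj_invariantD[OF N(2)] by blast
    ultimately show ?thesis using b f subgroup.m_closed[OF N(1)] by simp
  qed
  then show "a \<otimes> b \<in> {y \<in> H. \<forall>f\<in>K. comm G y f \<in> N}"
    using a b subgroup.m_closed[OF H] by blast
qed

lemma subgroup_comm_right_in:
  assumes N: "N \<lhd> G" and x: "x \<in> carrier G"
  shows "subgroup {f \<in> carrier G. comm G x f \<in> N} G"
proof (rule subgroupI)
  have Ns: "subgroup N G" by (rule normal_imp_subgroup[OF N])
  show "{f \<in> carrier G. comm G x f \<in> N} \<subseteq> carrier G" by blast
  have "\<one> \<in> {f \<in> carrier G. comm G x f \<in> N}" using x subgroup.one_closed[OF Ns] by simp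
  then show "{f \<in> carrier G. comm G x f \<in> N} \<noteq> {}" by blast
  fix a b assume a: "a \<in> {f \<in> carrier G. comm G x f \<in> N}" and b: "b \<in> {f \<in> carrier G. comm G x f \<in> N}"
  have "comm G x (inv a) = a \<otimes> inv (comm G x a) \<otimes> inv a"
    using a x by (simp add: comm_inv_right)
  moreover have "a \<otimes> inv (comm G x a) \<otimes> inv a \<in> N"
    using a normal.inv_op_closed2[OF N] subgroup.m_inv_closed[OF Ns] by blast
  ultimately show "inv a \<in> {f \<in> carrier G. comm G x f \<in> N}" using a by simp
  have "comm G x (a \<otimes> b) = comm G x b \<otimes> (inv b \<otimes> comm G x a \<otimes> b)"
    using a b x by (simp add: comm_mult_right m_assoc)
  moreover have "comm G x b \<otimes> (inv b \<otimes> comm G x a \<otimes> b) \<in> N"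
    using a b normal.inv_op_closed1[OF N] subgroup.m_closed[OF Ns] by blast
  ultimately show "a \<otimes> b \<in> {f \<in> carrier G. comm G x f \<in> N}" using a b by simp
qed

lemma normal_comm_into_normal:
  assumes N: "N \<lhd> G"
  shows "{y \<in> carrier G. \<forall>f\<in>carrier G. comm G y f \<in> N} \<lhd> G"
  unfolding normal_iff_conj_invariant
proof
  show "subgroup {y \<in> carrier G. \<forall>f\<in>carrier G. comm G y f \<in> N} G"
    using subgroup_comm_left_in[OF subgroup_self normal_imp_subgroup[OF N]] normal_conj_invariant[OF _ N]
    by blast
  show "conj_invariant G (carrier G) {y \<in> carrier G. \<forall>f\<in>carrier G. comm G y f \<in> N}"
  proof (rule conj_invariantI)
    fix g y assume g: "g \<in> carrier G" and y: "y \<in> {y \<in> carrier G. \<forall>f\<in>carrier G. comm G y f \<in> N}"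
    have "comm G (inv g \<otimes> y \<otimes> g) f \<in> N" if f: "f \<in> carrier G" for f
    proof -
      have "comm G (inv g \<otimes> y \<otimes> g) f = inv g \<otimes> comm G y (g \<otimes> f \<otimes> inv g) \<otimes> g"
        using comm_conj[of y "g \<otimes> f \<otimes> inv g" g] y g f by (simp add: m_assoc)
      moreover have "comm G y (g \<otimes> f \<otimes> inv g) \<in> N" using y g f by simp
      ultimately show ?thesis using normal.inv_op_closed1[OF N g] by simp
    qed
    then show "inv g \<otimes> y \<otimes> g \<in> {y \<in> carrier G. \<forall>f\<in>carrier G. comm G y f \<in> N}"
      using g y by simp
  qed
qed

lemma rel_comm_iter_subgroup:
  "subgroup Z G \<Longrightarrow> K \<subseteq> carrier G \<Longrightarrow> subgroup (rel_comm_iter G Z K n) G"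
  by (induction n) (simp_all add: comm_subgroup_is_subgroup subgroup.subset)

lemma rel_comm_iter_mono:
  "Z \<subseteq> Z' \<Longrightarrow> K \<subseteq> K' \<Longrightarrow> rel_comm_iter G Z K n \<subseteq> rel_comm_iter G Z' K' n"
  by (induction n) (simp_all add: comm_subgroup_mono)

lemma rel_comm_iter_subset:
  "subgroup Q G \<Longrightarrow> Z \<subseteq> Q \<Longrightarrow> K \<subseteq> Q \<Longrightarrow> rel_comm_iter G Z K n \<subseteq> Q"
  by (induction n) (simp_all add: comm_subgroup_subset)

lemma conj_invariant_rel_comm_iter:
  assumes "H \<subseteq> carrier G" "Z \<subseteq> carrier G" "K \<subseteq> carrier G"
    and "conj_invariant G H Z" "conj_invariant G H K"
  shows "conj_invariant G H (rel_comm_iter G Z K n)"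
proof (induction n)
  case (Suc n)
  have "rel_comm_iter G Z K n \<subseteq> carrier G"
    using rel_comm_iter_subset[OF subgroup_self assms(2,3)] .
  then show ?case
    using conj_invariant_comm_subgroup[OF assms(1) _ assms(3) Suc assms(5)] by simp
qed (simp add: assms(4))

lemma rel_comm_iter_normal:
  assumes "N \<lhd> G" shows "rel_comm_iter G N (carrier G) n \<lhd> G"
proof -
  have N: "subgroup N G" "conj_invariant G (carrier G) N"
    using assms normal_iff_conj_invariant by auto
  have "conj_invariant G (carrier G) (carrier G)"
    by (rule conj_invariantI) simp
  then show ?thesis
    unfolding normal_iff_conj_invariant
    using rel_comm_iter_subgroup[OF N(1) subset_refl]
      conj_invariant_rel_comm_iter[OF subset_refl subgroup.subset[OF N(1)] subset_refl N(2)] by simp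
qed

lemma comm_subgroup_consistent:
  assumes H: "subgroup H G" and "A \<subseteq> H" "B \<subseteq> H"
  shows "comm_subgroup (G\<lparr>carrier := H\<rparr>) A B = comm_subgroup G A B"
proof -
  have "comm (G\<lparr>carrier := H\<rparr>) a b = comm G a b" if "a \<in> A" "b \<in> B" for a b
  proof -
    have "a \<in> H" "b \<in> H" using that assms(2,3) by auto
    then show ?thesis by (simp add: comm_def m_inv_consistent[OF H])
  qed
  then have gens_eq: "{comm (G\<lparr>carrier := H\<rparr>) a b | a b. a \<in> A \<and> b \<in> B} = {comm G a b | a b. a \<in> A \<and> b \<in> B}"
    by (intro Collect_cong) (metis (no_types, lifting))
  have "{comm G a b | a b. a \<in> A \<and> b \<in> B} \<subseteq> comm_subgroup G A B"
    using comm_subgroup_incl[of _ A _ B G] by blast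
  also have "\<dots> \<subseteq> H" by (rule comm_subgroup_subset[OF assms])
  finally show ?thesis
    unfolding comm_subgroup_def gens_eq by (rule generate_consistent[OF _ H])
qed

lemma comm_iter_subgroup_eq:
  assumes H: "subgroup H G" and "Z \<subseteq> H"
  shows "comm_iter (G\<lparr>carrier := H\<rparr>) Z n = rel_comm_iter G Z H n"
proof (induction n)
  case (Suc n)
  have "rel_comm_iter G Z H n \<subseteq> H" by (rule rel_comm_iter_subset[OF H assms(2) subset_refl])
  then show ?case using Suc.IH comm_subgroup_consistent[OF H] by simp
qed simp

lemma comm_subgroup_subset_conj_invariant:
  assumes M: "subgroup M G" and "K \<subseteq> carrier G" "conj_invariant G K M"
  shows "comm_subgroup G M K \<subseteq> M"
proof (rule comm_subgroup_minimal[OF M])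
  fix x k assume x: "x \<in> M" and k: "k \<in> K"
  have "x \<in> carrier G" "k \<in> carrier G" using x k assms(2) subgroup.subset[OF M] by auto
  then have "comm G x k = inv x \<otimes> (inv k \<otimes> x \<otimes> k)" by (simp add: comm_def m_assoc)
  then show "comm G x k \<in> M"
    using x k conj_invariantD[OF assms(3)] subgroup.m_closed[OF M] subgroup.m_inv_closed[OF M] by simp
qed

lemma rel_comm_iter_set_mult_normal_subset:
  assumes Z: "Z \<subseteq> carrier G" and N: "N \<lhd> G"
  shows "rel_comm_iter G (Z <#> N) (carrier G) n
         \<subseteq> rel_comm_iter G Z (carrier G) n <#> rel_comm_iter G N (carrier G) n"
proof (induction n)
  case (Suc n)
  let ?K = "\<lambda>n. rel_comm_iter G Z (carrier G) n" and ?T = "\<lambda>n. rel_comm_iter G N (carrier G) n"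
  have K_carrier: "?K n \<subseteq> carrier G" by (rule rel_comm_iter_subset[OF subgroup_self Z subset_refl])
  have T: "?T n \<lhd> G" "?T (Suc n) \<lhd> G" using rel_comm_iter_normal[OF N] by blast+
  have K_Suc: "subgroup (?K (Suc n)) G" using comm_subgroup_is_subgroup[OF K_carrier] by simp
  have "comm_subgroup G (rel_comm_iter G (Z <#> N) (carrier G) n) (carrier G) \<subseteq> ?K (Suc n) <#> ?T (Suc n)"
  proof (rule comm_subgroup_minimal[OF subgroup_set_mult_normal[OF K_Suc T(2)]])
    fix x f assume "x \<in> rel_comm_iter G (Z <#> N) (carrier G) n" and f: "f \<in> carrier G"
    then obtain k t where kt: "k \<in> ?K n" "t \<in> ?T n" "x = k \<otimes> t" using Suc.IH by (blast elim: set_mult_memE)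
    have k: "k \<in> carrier G" using kt(1) K_carrier by blast
    have t: "t \<in> carrier G" by (rule subgroup.mem_carrier[OF normal_imp_subgroup[OF T(1)] kt(2)])
    have a: "comm G k f \<in> carrier G" using k f by simp
    have "comm G x f = (inv t \<otimes> comm G k f \<otimes> t) \<otimes> comm G t f"
      using comm_mult_left[OF k t f] kt(3) by simp
    also have "inv t \<otimes> comm G k f \<otimes> t = comm G k f \<otimes> comm G (comm G k f) t"
      by (rule conj_eq_mult_comm[OF a t])
    finally have "comm G x f = comm G k f \<otimes> (comm G (comm G k f) t \<otimes> comm G t f)"
      using a t f by (simp add: m_assoc)
    moreover have "comm G k f \<in> ?K (Suc n)" using comm_subgroup_incl[OF kt(1) f] by simp
    moreover have "comm G (comm G k f) t \<in> ?T (Suc n)"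
    proof -
      have "comm G t (comm G k f) \<in> ?T (Suc n)" using comm_subgroup_incl[OF kt(2) comm_closed[OF k f]] by simp
      then show ?thesis
        using inv_comm[OF t comm_closed[OF k f]] subgroup.m_inv_closed[OF normal_imp_subgroup[OF T(2)]]
        by metis
    qed
    moreover have "comm G t f \<in> ?T (Suc n)" using comm_subgroup_incl[OF kt(2) f] by simp
    ultimately show "comm G x f \<in> ?K (Suc n) <#> ?T (Suc n)"
      using subgroup.m_closed[OF normal_imp_subgroup[OF T(2)]] by (simp add: set_mult_memI)
  qed
  then show ?case by simp
qed simp

lemma set_mult_Int_by_retraction:
  assumes \<pi>: "group_hom G G \<pi>" and \<pi>_K: "\<And>x. x \<in> K \<Longrightarrow> \<pi> x = x" and \<pi>_S: "\<And>s. s \<in> S \<Longrightarrow> \<pi> s = \<one>"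
    and \<Gamma>: "subgroup \<Gamma> G" "\<pi> ` \<Gamma> \<subseteq> \<Gamma>'" "\<Gamma>' \<subseteq> \<Gamma>"
    and "K \<subseteq> carrier G" "S \<subseteq> carrier G"
  shows "(K <#> S) \<inter> \<Gamma> = (K \<inter> \<Gamma>') <#> (S \<inter> \<Gamma>)"
proof
  show "(K <#> S) \<inter> \<Gamma> \<subseteq> (K \<inter> \<Gamma>') <#> (S \<inter> \<Gamma>)"
  proof
    fix x assume x: "x \<in> (K <#> S) \<inter> \<Gamma>"
    then obtain r s where rs: "r \<in> K" "s \<in> S" "x = r \<otimes> s" by (blast elim: set_mult_memE)
    have carr: "r \<in> carrier G" "s \<in> carrier G" using rs assms(7,8) by auto
    have "\<pi> x = r" using rs carr \<pi>_K \<pi>_S group_hom.hom_mult[OF \<pi>] by simp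
    then have "r \<in> \<Gamma>'" using x \<Gamma>(2) by blast
    moreover have "s = inv r \<otimes> x" using rs carr by simp
    moreover have "inv r \<otimes> x \<in> \<Gamma>"
      using x \<open>r \<in> \<Gamma>'\<close> \<Gamma>(3) subgroup.m_closed[OF \<Gamma>(1)] subgroup.m_inv_closed[OF \<Gamma>(1)] by blast
    ultimately show "x \<in> (K \<inter> \<Gamma>') <#> (S \<inter> \<Gamma>)" using rs by (simp add: set_mult_memI)
  qed
  show "(K \<inter> \<Gamma>') <#> (S \<inter> \<Gamma>) \<subseteq> (K <#> S) \<inter> \<Gamma>"
    using \<Gamma>(3) subgroup.m_closed[OF \<Gamma>(1)] by (auto simp: set_mult_def)
qed

end

lemma (in group_hom) hom_comm:
  "x \<in> carrier G \<Longrightarrow> y \<in> carrier G \<Longrightarrow> h (comm G x y) = comm H (h x) (h y)"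
  by (simp add: comm_def)

lemma (in group_hom) comm_subgroup_img:
  assumes "A \<subseteq> carrier G" "B \<subseteq> carrier G"
  shows "h ` comm_subgroup G A B = comm_subgroup H (h ` A) (h ` B)"
proof -
  have "h ` {comm G a b | a b. a \<in> A \<and> b \<in> B} = {comm H a b | a b. a \<in> h ` A \<and> b \<in> h ` B}"
  proof (intro equalityI subsetI)
    fix z assume "z \<in> h ` {comm G a b | a b. a \<in> A \<and> b \<in> B}"
    then obtain a b where ab: "a \<in> A" "b \<in> B" "z = h (comm G a b)" by blast
    moreover have "a \<in> carrier G" "b \<in> carrier G" using ab assms by auto
    ultimately have "z = comm H (h a) (h b)" by (simp add: hom_comm)
    then show "z \<in> {comm H a b | a b. a \<in> h ` A \<and> b \<in> h ` B}" using ab by blast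
  next
    fix z assume "z \<in> {comm H a b | a b. a \<in> h ` A \<and> b \<in> h ` B}"
    then obtain a b where ab: "a \<in> A" "b \<in> B" "z = comm H (h a) (h b)" by blast
    moreover have "a \<in> carrier G" "b \<in> carrier G" using ab assms by auto
    ultimately have "z = h (comm G a b)" by (simp add: hom_comm)
    then show "z \<in> h ` {comm G a b | a b. a \<in> A \<and> b \<in> B}" using ab by blast
  qed
  moreover have "{comm G a b | a b. a \<in> A \<and> b \<in> B} \<subseteq> carrier G"
    using assms by (blast intro: G.comm_closed)
  then have "h ` generate G {comm G a b | a b. a \<in> A \<and> b \<in> B}
             = generate H (h ` {comm G a b | a b. a \<in> A \<and> b \<in> B})"
    by (rule generate_img[symmetric])
  ultimately show ?thesis unfolding comm_subgroup_def by simp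
qed

lemma (in group_hom) rel_comm_iter_img:
  assumes "subgroup Z G" "K \<subseteq> carrier G"
  shows "h ` rel_comm_iter G Z K n = rel_comm_iter H (h ` Z) (h ` K) n"
  by (induction n)
    (simp_all add: assms comm_subgroup_img subgroup.subset G.rel_comm_iter_subgroup)

section \<open>The retraction of a free product onto a factor\<close>

definition list_prod :: "('a, 'b) monoid_scheme \<Rightarrow> 'a list \<Rightarrow> 'a" where
  "list_prod G ws = foldr (\<otimes>\<^bsub>G\<^esub>) ws \<one>\<^bsub>G\<^esub>"

text \<open>\<open>factor_part G F\<^sub>2\<close> is the retraction onto \<open>F\<^sub>2\<close> on the letters of a word over \<open>F\<^sub>1 \<union> F\<^sub>2\<close>.\<close>
definition factor_part :: "('a, 'b) monoid_scheme \<Rightarrow> 'a set \<Rightarrow> 'a \<Rightarrow> 'a" where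
  "factor_part G H x = (if x \<in> H then x else \<one>\<^bsub>G\<^esub>)"

lemma list_prod_simps [simp]:
  "list_prod G [] = \<one>\<^bsub>G\<^esub>" "list_prod G (w # ws) = w \<otimes>\<^bsub>G\<^esub> list_prod G ws"
  by (simp_all add: list_prod_def)

context group
begin

lemma list_prod_closed: "set ws \<subseteq> carrier G \<Longrightarrow> list_prod G ws \<in> carrier G"
  by (induction ws) auto

lemma list_prod_append:
  "set ws \<subseteq> carrier G \<Longrightarrow> set vs \<subseteq> carrier G \<Longrightarrow> list_prod G (ws @ vs) = list_prod G ws \<otimes> list_prod G vs"
  by (induction ws) (auto simp: m_assoc list_prod_closed)

lemma list_prod_rev_inv:
  "set ws \<subseteq> carrier G \<Longrightarrow> list_prod G (rev (map (\<lambda>w. inv w) ws)) = inv (list_prod G ws)"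
proof (induction ws)
  case (Cons w ws)
  have "set (rev (map (\<lambda>w. inv w) ws)) \<subseteq> carrier G" using Cons.prems by auto
  then show ?case using Cons by (simp add: list_prod_append list_prod_closed inv_mult_group)
qed simp

lemma list_prod_merge:
  assumes "set xs \<subseteq> carrier G" "a \<in> carrier G" "b \<in> carrier G" "set ys \<subseteq> carrier G"
  shows "list_prod G (xs @ a # b # ys) = list_prod G (xs @ (a \<otimes> b) # ys)"
  using assms by (simp add: list_prod_append list_prod_closed m_assoc)

lemma list_prod_in_subgroup: "subgroup H G \<Longrightarrow> set ws \<subseteq> H \<Longrightarrow> list_prod G ws \<in> H"
  by (induction ws) (simp_all add: subgroup.one_closed subgroup.m_closed)

lemma list_prod_drop_one:
  "set xs \<subseteq> carrier G \<Longrightarrow> set ys \<subseteq> carrier G \<Longrightarrow> list_prod G (xs @ \<one> # ys) = list_prod G (xs @ ys)"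
  by (simp add: list_prod_append list_prod_closed)

lemma factor_part_closed: "subgroup H G \<Longrightarrow> factor_part G H x \<in> H"
  by (simp add: factor_part_def subgroup.one_closed)

lemma factor_part_carrier: "subgroup H G \<Longrightarrow> factor_part G H x \<in> carrier G"
  by (simp add: factor_part_def subgroup.mem_carrier)

lemma factor_part_inv:
  "subgroup H G \<Longrightarrow> x \<in> carrier G \<Longrightarrow> factor_part G H (inv x) = inv (factor_part G H x)"
  by (auto simp: factor_part_def subgroup.m_inv_closed dest: subgroup.m_inv_closed[where x = "inv x"])

lemma factor_part_complement: "F1 \<inter> F2 = {\<one>} \<Longrightarrow> x \<in> F1 \<Longrightarrow> factor_part G F2 x = \<one>"
  by (auto simp: factor_part_def)

lemma factor_part_mult:
  assumes "subgroup F1 G" "subgroup F2 G" "F1 \<inter> F2 = {\<one>}"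
    and "a \<in> F1 \<and> b \<in> F1 \<or> a \<in> F2 \<and> b \<in> F2"
  shows "factor_part G F2 (a \<otimes> b) = factor_part G F2 a \<otimes> factor_part G F2 b"
proof (cases "a \<in> F2 \<and> b \<in> F2")
  case True
  then show ?thesis by (simp add: factor_part_def subgroup.m_closed[OF assms(2)])
next
  case False
  then have "a \<in> F1" "b \<in> F1" "a \<otimes> b \<in> F1" using assms(4) subgroup.m_closed[OF assms(1)] by auto
  then show ?thesis by (simp add: factor_part_complement[OF assms(3)])
qed

lemma generate_obtain_list_prod:
  assumes "S \<subseteq> carrier G" "\<And>s. s \<in> S \<Longrightarrow> inv s \<in> S" and "x \<in> generate G S"
  obtains ws where "set ws \<subseteq> S" "list_prod G ws = x"
proof -
  from assms(3) have "\<exists>ws. set ws \<subseteq> S \<and> list_prod G ws = x"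
  proof (induction rule: generate.induct)
    case one
    show ?case by (intro exI[of _ "[]"]) simp
  next
    case (incl s)
    then show ?case using assms(1) by (intro exI[of _ "[s]"]) auto
  next
    case (inv s)
    then show ?case using assms(1,2) by (intro exI[of _ "[inv s]"]) auto
  next
    case (eng a b)
    then obtain ws vs where "set ws \<subseteq> S" "list_prod G ws = a" "set vs \<subseteq> S" "list_prod G vs = b"
      by blast
    then show ?case using assms(1) by (intro exI[of _ "ws @ vs"]) (auto simp: list_prod_append)
  qed
  then show ?thesis using that by blast
qed

end

lemma list_split_at_pair:
  "Suc i < length ws \<Longrightarrow> ws = take i ws @ ws ! i # ws ! Suc i # drop (Suc (Suc i)) ws"
  by (metis Cons_nth_drop_Suc Suc_lessD append_take_drop_id)

context group
begin

text \<open>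
  Dropping a trivial letter or merging two adjacent letters from the same factor preserves both
  products; a word admitting neither move is empty by the defining property of free products.
\<close>
lemma free_product_factor_part_trivial:
  assumes fp: "free_product G F1 F2"
  shows "set ws \<subseteq> F1 \<union> F2 \<Longrightarrow> list_prod G ws = \<one> \<Longrightarrow> list_prod G (map (factor_part G F2) ws) = \<one>"
proof (induction "length ws" arbitrary: ws rule: less_induct)
  case less
  have F: "subgroup F1 G" "subgroup F2 G" "F1 \<inter> F2 = {\<one>}" using fp by (auto simp: free_product_def)
  have carr: "set ws \<subseteq> carrier G" using less.prems(1) F(1,2) subgroup.subset by blast
  consider (one) "\<one> \<in> set ws"
    | (merge) i where "Suc i < length ws" "ws ! i \<in> F1 \<and> ws ! Suc i \<in> F1 \<or> ws ! i \<in> F2 \<and> ws ! Suc i \<in> F2"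
    | (reduced) "set ws \<subseteq> (F1 \<union> F2) - {\<one>}"
        "\<forall>i. Suc i < length ws \<longrightarrow> \<not> (ws ! i \<in> F1 \<and> ws ! Suc i \<in> F1) \<and> \<not> (ws ! i \<in> F2 \<and> ws ! Suc i \<in> F2)"
    using less.prems(1) by blast
  then show ?case
  proof cases
    case one
    then obtain xs ys where ws: "ws = xs @ \<one> # ys" by (meson split_list)
    have "length (xs @ ys) < length ws" "set (xs @ ys) \<subseteq> F1 \<union> F2" "list_prod G (xs @ ys) = \<one>"
      using less.prems ws carr by (auto simp: list_prod_append list_prod_closed)
    then have "list_prod G (map (factor_part G F2) (xs @ ys)) = \<one>" by (rule less.hyps)
    moreover have "set (map (factor_part G F2) xs) \<subseteq> carrier G" "set (map (factor_part G F2) ys) \<subseteq> carrier G"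
      using factor_part_closed[OF F(2)] subgroup.subset[OF F(2)] by auto
    moreover have "factor_part G F2 \<one> = \<one>" by (simp add: factor_part_def)
    ultimately show ?thesis using ws by (simp add: list_prod_drop_one)
  next
    case merge
    define xs where "xs = take i ws"
    define a where "a = ws ! i"
    define b where "b = ws ! Suc i"
    define ys where "ys = drop (Suc (Suc i)) ws"
    have ws: "ws = xs @ a # b # ys" unfolding xs_def a_def b_def ys_def by (rule list_split_at_pair[OF merge(1)])
    have ab: "a \<in> F1 \<and> b \<in> F1 \<or> a \<in> F2 \<and> b \<in> F2" using merge(2) a_def b_def by simp
    have "a \<otimes> b \<in> F1 \<union> F2" using ab subgroup.m_closed[OF F(1)] subgroup.m_closed[OF F(2)] by blast
    then have "length (xs @ (a \<otimes> b) # ys) < length ws" "set (xs @ (a \<otimes> b) # ys) \<subseteq> F1 \<union> F2"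
      "list_prod G (xs @ (a \<otimes> b) # ys) = \<one>"
      using less.prems ws carr by (auto simp: list_prod_merge[symmetric])
    then have "list_prod G (map (factor_part G F2) (xs @ (a \<otimes> b) # ys)) = \<one>" by (rule less.hyps)
    have "list_prod G (map (factor_part G F2) ws)
          = list_prod G (map (factor_part G F2) xs @ factor_part G F2 a # factor_part G F2 b # map (factor_part G F2) ys)"
      using ws by simp
    also have "\<dots> = list_prod G (map (factor_part G F2) (xs @ (a \<otimes> b) # ys))"
      using list_prod_merge[of "map (factor_part G F2) xs" "factor_part G F2 a" "factor_part G F2 b"
          "map (factor_part G F2) ys"] factor_part_carrier[OF F(2)] factor_part_mult[OF F ab] by auto
    finally show ?thesis using \<open>list_prod G (map (factor_part G F2) (xs @ (a \<otimes> b) # ys)) = \<one>\<close> by simp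
  next
    case reduced
    have "ws \<noteq> [] \<longrightarrow> foldr (\<otimes>) ws \<one> \<noteq> \<one>"
      using fp reduced unfolding free_product_def by blast
    then show ?thesis using less.prems(2) by (auto simp: list_prod_def)
  qed
qed

lemma free_product_factor_part_eq:
  assumes fp: "free_product G F1 F2" and ws: "set ws \<subseteq> F1 \<union> F2" and vs: "set vs \<subseteq> F1 \<union> F2"
    and eq: "list_prod G ws = list_prod G vs"
  shows "list_prod G (map (factor_part G F2) ws) = list_prod G (map (factor_part G F2) vs)"
proof -
  have F: "subgroup F1 G" "subgroup F2 G" using fp by (auto simp: free_product_def)
  have F_carrier: "F1 \<union> F2 \<subseteq> carrier G" using F subgroup.subset by blast
  let ?vs' = "rev (map (\<lambda>w. inv w) vs)"
  let ?p = "\<lambda>ws. list_prod G (map (factor_part G F2) ws)"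
  have p_carrier: "set (map (factor_part G F2) us) \<subseteq> carrier G" for us
    using factor_part_carrier[OF F(2)] by auto
  have vs'_F: "set ?vs' \<subseteq> F1 \<union> F2"
    using vs subgroup.m_inv_closed[OF F(1)] subgroup.m_inv_closed[OF F(2)] by auto
  have "list_prod G (ws @ ?vs') = \<one>"
    using ws vs vs'_F F_carrier eq by (simp add: list_prod_append list_prod_rev_inv list_prod_closed subset_trans)
  then have "?p (ws @ ?vs') = \<one>"
    using free_product_factor_part_trivial[OF fp] ws vs'_F by (metis Un_subset_iff set_append)
  moreover have "?p (ws @ ?vs') = ?p ws \<otimes> ?p ?vs'"
    unfolding map_append by (rule list_prod_append[OF p_carrier p_carrier])
  moreover have "map (factor_part G F2) ?vs' = rev (map (\<lambda>w. inv w) (map (factor_part G F2) vs))"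
    using vs F_carrier factor_part_inv[OF F(2)] by (auto simp: rev_map)
  then have "?p ?vs' = inv (?p vs)" using list_prod_rev_inv[OF p_carrier] by simp
  ultimately have "?p ws \<otimes> inv (?p vs) = \<one>" by simp
  then show ?thesis using list_prod_closed[OF p_carrier] by (metis inv_closed inv_equality inv_inv)
qed

lemma free_product_retraction:
  assumes fp: "free_product G F1 F2"
  obtains \<pi> where "group_hom G G \<pi>" "\<pi> ` carrier G \<subseteq> F2"
    "\<And>x. x \<in> F2 \<Longrightarrow> \<pi> x = x" "\<And>x. x \<in> F1 \<Longrightarrow> \<pi> x = \<one>"
proof -
  have F: "subgroup F1 G" "subgroup F2 G" "F1 \<inter> F2 = {\<one>}" and gen: "generate G (F1 \<union> F2) = carrier G"
    using fp by (auto simp: free_product_def)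
  have F_carrier: "F1 \<union> F2 \<subseteq> carrier G" using F(1,2) subgroup.subset by blast
  have words: "\<exists>ws. set ws \<subseteq> F1 \<union> F2 \<and> list_prod G ws = x" if "x \<in> carrier G" for x
  proof -
    have "x \<in> generate G (F1 \<union> F2)" using that gen by simp
    moreover have "inv y \<in> F1 \<union> F2" if "y \<in> F1 \<union> F2" for y
      using that subgroup.m_inv_closed[OF F(1)] subgroup.m_inv_closed[OF F(2)] by blast
    ultimately show ?thesis using generate_obtain_list_prod[OF F_carrier] by metis
  qed
  define proj where "proj ws = list_prod G (map (factor_part G F2) ws)" for ws
  have proj_F2: "proj ws \<in> F2" for ws
    unfolding proj_def by (rule list_prod_in_subgroup[OF F(2)]) (auto intro: factor_part_closed[OF F(2)])
  define \<pi> where "\<pi> x = proj (SOME ws. set ws \<subseteq> F1 \<union> F2 \<and> list_prod G ws = x)" for x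
  have \<pi>_list_prod: "\<pi> (list_prod G ws) = proj ws" if ws: "set ws \<subseteq> F1 \<union> F2" for ws
  proof -
    let ?vs = "SOME vs. set vs \<subseteq> F1 \<union> F2 \<and> list_prod G vs = list_prod G ws"
    have "set ?vs \<subseteq> F1 \<union> F2 \<and> list_prod G ?vs = list_prod G ws"
      by (rule someI[of _ ws]) (simp add: ws)
    then show ?thesis
      unfolding \<pi>_def proj_def by (intro free_product_factor_part_eq[OF fp]) (simp_all add: ws)
  qed
  have \<pi>_letter: "\<pi> x = factor_part G F2 x" if "x \<in> F1 \<union> F2" for x
    using \<pi>_list_prod[of "[x]"] that F_carrier factor_part_carrier[OF F(2)] by (auto simp: proj_def)
  have "group_hom G G \<pi>"
  proof (unfold_locales, rule homI)
    fix x assume "x \<in> carrier G"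
    then obtain ws where "set ws \<subseteq> F1 \<union> F2" "x = list_prod G ws" using words by blast
    then show "\<pi> x \<in> carrier G" using \<pi>_list_prod proj_F2 subgroup.mem_carrier[OF F(2)] by simp
  next
    fix x y assume "x \<in> carrier G" "y \<in> carrier G"
    then obtain ws vs where "set ws \<subseteq> F1 \<union> F2" "x = list_prod G ws" "set vs \<subseteq> F1 \<union> F2" "y = list_prod G vs"
      using words by metis
    moreover have "x \<otimes> y = list_prod G (ws @ vs)"
      using calculation F_carrier by (simp add: list_prod_append subset_trans)
    ultimately show "\<pi> (x \<otimes> y) = \<pi> x \<otimes> \<pi> y"
      using \<pi>_list_prod factor_part_carrier[OF F(2)] by (auto simp: proj_def intro!: list_prod_append)
  qed
  moreover have "\<pi> ` carrier G \<subseteq> F2"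
    using words \<pi>_list_prod proj_F2 by force
  moreover have "\<pi> x = x" if "x \<in> F2" for x using \<pi>_letter that by (simp add: factor_part_def)
  moreover have "\<pi> x = \<one>" if "x \<in> F1" for x using \<pi>_letter that factor_part_complement[OF F(3)] by simp
  ultimately show ?thesis using that by blast
qed

end

section \<open>Groups generated by two subgroups\<close>

locale generated_by_factors = group G for G (structure) +
  fixes F1 F2 :: "'a set"
  assumes F1_subgroup: "subgroup F1 G" and F2_subgroup: "subgroup F2 G"
    and generate_factors: "generate G (F1 \<union> F2) = carrier G"
begin

lemma factors_carrier: "F1 \<union> F2 \<subseteq> carrier G"
  using F1_subgroup F2_subgroup subgroup.subset by blast

lemma carrier_subset_if_factors: "subgroup H G \<Longrightarrow> F1 \<union> F2 \<subseteq> H \<Longrightarrow> carrier G \<subseteq> H"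
  using generate_subgroup_incl generate_factors by metis

lemma normal_if_conj_invariant_factors:
  "subgroup N G \<Longrightarrow> conj_invariant G (F1 \<union> F2) N \<Longrightarrow> N \<lhd> G"
  by (rule normal_if_conj_invariant_generators[OF _ factors_carrier generate_factors])
    (auto intro: subgroup.m_inv_closed[OF F1_subgroup] subgroup.m_inv_closed[OF F2_subgroup])

lemma set_mult_normal_if_comm_F1:
  assumes M: "subgroup M G" "conj_invariant G F2 M" and N: "N \<lhd> G"
    and comm_F1: "\<And>x f. x \<in> M \<Longrightarrow> f \<in> F1 \<Longrightarrow> comm G x f \<in> N"
  shows "M <#> N \<lhd> G"
proof (rule normal_if_conj_invariant_factors[OF subgroup_set_mult_normal[OF M(1) N]])
  have N_sub: "subgroup N G" by (rule normal_imp_subgroup[OF N])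
  show "conj_invariant G (F1 \<union> F2) (M <#> N)"
  proof (rule conj_invariantI)
    fix g z assume g: "g \<in> F1 \<union> F2" and "z \<in> M <#> N"
    then obtain x n where xn: "x \<in> M" "n \<in> N" "z = x \<otimes> n" by (blast elim: set_mult_memE)
    have carr: "g \<in> carrier G" "x \<in> carrier G" "n \<in> carrier G"
      using g xn factors_carrier subgroup.subset[OF M(1)] subgroup.subset[OF N_sub] by auto
    have z: "inv g \<otimes> z \<otimes> g = (inv g \<otimes> x \<otimes> g) \<otimes> (inv g \<otimes> n \<otimes> g)"
      using carr xn(3) by (simp add: m_assoc)
    have n': "inv g \<otimes> n \<otimes> g \<in> N" using normal.inv_op_closed1[OF N carr(1) xn(2)] .
    show "inv g \<otimes> z \<otimes> g \<in> M <#> N"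
    proof (cases "g \<in> F2")
      case True
      show ?thesis unfolding z using conj_invariantD[OF M(2) True xn(1)] n' by (rule set_mult_memI)
    next
      case False
      then have "g \<in> F1" using g by blast
      have "inv g \<otimes> z \<otimes> g = x \<otimes> (comm G x g \<otimes> (inv g \<otimes> n \<otimes> g))"
        unfolding z using conj_eq_mult_comm[OF carr(2,1)] carr by (simp add: m_assoc)
      moreover have "comm G x g \<otimes> (inv g \<otimes> n \<otimes> g) \<in> N"
        using comm_F1[OF xn(1) \<open>g \<in> F1\<close>] n' subgroup.m_closed[OF N_sub] by blast
      ultimately show ?thesis using xn(1) by (simp add: set_mult_memI)
    qed
  qed
qed

end

locale factor_relators = generated_by_factors +
  fixes R2 S :: "'a set"
  assumes R2_normal: "R2 \<lhd> G\<lparr>carrier := F2\<rparr>" and S_normal: "S \<lhd> G"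
    and comm_R2_F1: "comm_subgroup G R2 F1 \<subseteq> S"
begin

lemma R2_subgroup: "subgroup R2 G"
  using incl_subgroup[OF F2_subgroup normal_imp_subgroup[OF R2_normal]] .

lemma R2_subset_F2: "R2 \<subseteq> F2"
  using subgroup.subset[OF normal_imp_subgroup[OF R2_normal]] by simp

lemma conj_invariant_R2: "conj_invariant G F2 R2"
proof (rule conj_invariantI)
  fix h r assume "h \<in> F2" "r \<in> R2"
  then show "inv h \<otimes> r \<otimes> h \<in> R2"
    using normal.inv_op_closed1[OF R2_normal] m_inv_consistent[OF F2_subgroup] by fastforce
qed

lemma S_subgroup: "subgroup S G"
  by (rule normal_imp_subgroup[OF S_normal])

lemma R2_S_normal: "R2 <#> S \<lhd> G"
  using set_mult_normal_if_comm_F1[OF R2_subgroup conj_invariant_R2 S_normal] comm_R2_F1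
  by (blast intro: comm_subgroup_incl)

end

context factor_relators
begin

text \<open>\<open>pure_comm c\<close> is \<open>[R\<^sub>2, \<^sub>cF\<^sub>2]\<close> and \<open>mixed_comm c\<close> is \<open>\<Prod>[R\<^sub>2, F\<^sub>1, F\<^sub>2]\<^sub>c\<close>.\<close>
abbreviation pure_comm :: "nat \<Rightarrow> 'a set" where
  "pure_comm c \<equiv> rel_comm_iter G R2 F2 c"

definition pure_lcomms :: "nat \<Rightarrow> 'a set" where
  "pure_lcomms c = {lcomm G r gs | r gs. r \<in> R2 \<and> length gs = c \<and> set gs \<subseteq> F2}"

definition mixed_lcomms :: "nat \<Rightarrow> 'a set" where
  "mixed_lcomms c = {lcomm G r fs | r fs. r \<in> R2 \<and> length fs = c \<and> set fs \<subseteq> F1 \<union> F2 \<and> (\<exists>f \<in> set fs. f \<in> F1)}"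

definition mixed_comm :: "nat \<Rightarrow> 'a set" where
  "mixed_comm c = normal_closure G (mixed_lcomms c)"

lemma pure_comm_subgroup: "subgroup (pure_comm c) G"
  using rel_comm_iter_subgroup[OF R2_subgroup subgroup.subset[OF F2_subgroup]] .

lemma pure_comm_subset_F2: "pure_comm c \<subseteq> F2"
  by (rule rel_comm_iter_subset[OF F2_subgroup R2_subset_F2 subset_refl])

lemma conj_invariant_pure_comm: "conj_invariant G F2 (pure_comm c)"
proof -
  have "F2 \<subseteq> carrier G" "R2 \<subseteq> carrier G"
    using subgroup.subset[OF F2_subgroup] R2_subset_F2 by auto
  moreover have "conj_invariant G F2 F2"
    by (rule conj_invariantI) (simp add: F2_subgroup subgroup.m_closed subgroup.m_inv_closed)
  ultimately show ?thesis
    using conj_invariant_rel_comm_iter conj_invariant_R2 by blast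
qed

lemma pure_comm_Suc_subset: "pure_comm (Suc c) \<subseteq> pure_comm c"
  using comm_subgroup_subset_conj_invariant[OF pure_comm_subgroup subgroup.subset[OF F2_subgroup]
      conj_invariant_pure_comm] by simp

lemma pure_lcomms_subset_F2: "pure_lcomms c \<subseteq> F2"
proof
  fix x assume "x \<in> pure_lcomms c"
  then obtain r gs where "x = lcomm G r gs" "r \<in> R2" "set gs \<subseteq> F2" unfolding pure_lcomms_def by blast
  then have "x \<in> pure_comm (length gs)" by (simp add: lcomm_in_rel_comm_iter)
  then show "x \<in> F2" using pure_comm_subset_F2 by blast
qed

lemma conj_invariant_pure_lcomms: "conj_invariant G F2 (pure_lcomms c)"
proof (rule conj_invariantI)
  fix h b assume h: "h \<in> F2" and "b \<in> pure_lcomms c"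
  then obtain r gs where b: "b = lcomm G r gs" "r \<in> R2" "length gs = c" "set gs \<subseteq> F2"
    unfolding pure_lcomms_def by blast
  have carr: "h \<in> carrier G" "r \<in> carrier G" "set gs \<subseteq> carrier G"
    using h b R2_subset_F2 subgroup.subset[OF F2_subgroup] by auto
  have "inv h \<otimes> b \<otimes> h = lcomm G (inv h \<otimes> r \<otimes> h) (map (\<lambda>g. inv h \<otimes> g \<otimes> h) gs)"
    using lcomm_conj[OF carr] b(1) by simp
  moreover have "inv h \<otimes> r \<otimes> h \<in> R2" using conj_invariantD[OF conj_invariant_R2 h b(2)] .
  moreover have "set (map (\<lambda>g. inv h \<otimes> g \<otimes> h) gs) \<subseteq> F2"
    using b(4) h by (auto intro!: subgroup.m_closed[OF F2_subgroup] subgroup.m_inv_closed[OF F2_subgroup])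
  ultimately show "inv h \<otimes> b \<otimes> h \<in> pure_lcomms c"
    unfolding pure_lcomms_def using b(3) by fastforce
qed

lemma pure_comm_subset_generate: "pure_comm c \<subseteq> generate G (pure_lcomms c)"
proof (induction c)
  case 0
  have "pure_lcomms 0 = R2" by (auto simp: pure_lcomms_def)
  then show ?case by (auto intro: generate.incl)
next
  case (Suc c)
  let ?Q = "generate G (pure_lcomms (Suc c))"
  have lcomms_carrier: "pure_lcomms (Suc c) \<subseteq> carrier G"
    using pure_lcomms_subset_F2 subgroup.subset[OF F2_subgroup] by blast
  have Q: "subgroup ?Q G" "conj_invariant G F2 ?Q"
    using generate_is_subgroup[OF lcomms_carrier]
      conj_invariant_generate[OF lcomms_carrier subgroup.subset[OF F2_subgroup] conj_invariant_pure_lcomms]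
    by auto
  let ?Y = "{y \<in> F2. \<forall>g\<in>F2. comm G y g \<in> ?Q}"
  have "subgroup ?Y G"
    by (rule subgroup_comm_left_in[OF F2_subgroup Q subgroup.subset[OF F2_subgroup]])
  moreover have "pure_lcomms c \<subseteq> ?Y"
  proof
    fix b assume b: "b \<in> pure_lcomms c"
    then obtain r gs where rg: "b = lcomm G r gs" "r \<in> R2" "length gs = c" "set gs \<subseteq> F2"
      unfolding pure_lcomms_def by blast
    have "comm G b g \<in> pure_lcomms (Suc c)" if "g \<in> F2" for g
      unfolding pure_lcomms_def using rg that
      by (intro CollectI exI[of _ r] exI[of _ "gs @ [g]"]) auto
    then show "b \<in> ?Y" using b pure_lcomms_subset_F2 by (blast intro: generate.incl)
  qed
  ultimately have "generate G (pure_lcomms c) \<subseteq> ?Y" by (rule generate_subgroup_incl[rotated])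
  then have Y: "pure_comm c \<subseteq> ?Y" using Suc.IH by (rule subset_trans[rotated])
  have "comm_subgroup G (pure_comm c) F2 \<subseteq> ?Q"
  proof (rule comm_subgroup_minimal[OF Q(1)])
    fix y g assume "y \<in> pure_comm c" "g \<in> F2"
    then show "comm G y g \<in> ?Q" using Y by blast
  qed
  then show ?case by simp
qed


lemma mixed_lcomms_carrier: "mixed_lcomms c \<subseteq> carrier G"
proof
  fix x assume "x \<in> mixed_lcomms c"
  then obtain r fs where "x = lcomm G r fs" "r \<in> R2" "set fs \<subseteq> F1 \<union> F2"
    unfolding mixed_lcomms_def by blast
  then show "x \<in> carrier G"
    using lcomm_closed factors_carrier R2_subset_F2 subgroup.subset[OF F2_subgroup] by blast
qed

lemma mixed_comm_normal: "mixed_comm c \<lhd> G"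
  unfolding mixed_comm_def by (rule normal_closure_normal[OF mixed_lcomms_carrier])

lemma lcomm_in_mixed_comm:
  "\<lbrakk>r \<in> R2; set fs \<subseteq> F1 \<union> F2; f \<in> set fs; f \<in> F1\<rbrakk> \<Longrightarrow> lcomm G r fs \<in> mixed_comm (length fs)"
  unfolding mixed_comm_def
  by (rule normal_closure_incl[OF mixed_lcomms_carrier]) (auto simp: mixed_lcomms_def)

lemma comm_pure_F1_in_mixed:
  assumes y: "y \<in> pure_comm c" and f: "f \<in> F1"
  shows "comm G y f \<in> mixed_comm (Suc c)"
proof -
  let ?C = "{y \<in> carrier G. \<forall>f\<in>F1. comm G y f \<in> mixed_comm (Suc c)}"
  have "subgroup ?C G"
    using subgroup_comm_left_in[OF subgroup_self normal_imp_subgroup[OF mixed_comm_normal]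
        normal_conj_invariant[OF subset_refl mixed_comm_normal]] factors_carrier
    by blast
  moreover have "pure_lcomms c \<subseteq> ?C"
  proof
    fix b assume b: "b \<in> pure_lcomms c"
    then obtain r gs where rg: "b = lcomm G r gs" "r \<in> R2" "length gs = c" "set gs \<subseteq> F2"
      unfolding pure_lcomms_def by blast
    have "comm G b f' \<in> mixed_comm (Suc c)" if "f' \<in> F1" for f'
      using lcomm_in_mixed_comm[OF rg(2), of "gs @ [f']" f'] rg that by auto
    then show "b \<in> ?C" using b pure_lcomms_subset_F2 subgroup.subset[OF F2_subgroup] by blast
  qed
  ultimately have "generate G (pure_lcomms c) \<subseteq> ?C" by (rule generate_subgroup_incl[rotated])
  then show ?thesis using y f pure_comm_subset_generate by blast
qed

lemma comm_mixed_in_mixed: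
  assumes x: "x \<in> mixed_comm c" and f: "f \<in> carrier G"
  shows "comm G x f \<in> mixed_comm (Suc c)"
proof -
  let ?C = "{y \<in> carrier G. \<forall>f\<in>carrier G. comm G y f \<in> mixed_comm (Suc c)}"
  have "mixed_lcomms c \<subseteq> ?C"
  proof
    fix u assume u: "u \<in> mixed_lcomms c"
    then obtain r fs f0 where rf: "u = lcomm G r fs" "r \<in> R2" "length fs = c" "set fs \<subseteq> F1 \<union> F2"
      "f0 \<in> set fs" "f0 \<in> F1"
      unfolding mixed_lcomms_def by blast
    have u_carrier: "u \<in> carrier G" using u mixed_lcomms_carrier by blast
    have "F1 \<union> F2 \<subseteq> {f \<in> carrier G. comm G u f \<in> mixed_comm (Suc c)}"
    proof
      fix g assume g: "g \<in> F1 \<union> F2"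
      have "comm G u g = lcomm G r (fs @ [g])" using rf(1) by simp
      moreover have "lcomm G r (fs @ [g]) \<in> mixed_comm (Suc c)"
        using lcomm_in_mixed_comm[OF rf(2), of "fs @ [g]" f0] rf g by simp
      ultimately show "g \<in> {f \<in> carrier G. comm G u f \<in> mixed_comm (Suc c)}"
        using g factors_carrier by auto
    qed
    then have "carrier G \<subseteq> {f \<in> carrier G. comm G u f \<in> mixed_comm (Suc c)}"
      by (rule carrier_subset_if_factors[OF subgroup_comm_right_in[OF mixed_comm_normal u_carrier]])
    then show "u \<in> ?C" using u_carrier by blast
  qed
  then have "mixed_comm c \<subseteq> ?C"
    unfolding mixed_comm_def[of c] by (rule normal_closure_minimal[OF normal_comm_into_normal[OF mixed_comm_normal]])
  then show ?thesis using x f by blast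
qed

lemma pure_mixed_normal: "pure_comm (Suc c) <#> mixed_comm (Suc c) \<lhd> G"
proof (rule set_mult_normal_if_comm_F1[OF pure_comm_subgroup conj_invariant_pure_comm mixed_comm_normal])
  fix y f assume "y \<in> pure_comm (Suc c)" "f \<in> F1"
  then show "comm G y f \<in> mixed_comm (Suc c)"
    using comm_pure_F1_in_mixed pure_comm_Suc_subset by blast
qed

lemma comm_pure_in_pure_mixed:
  assumes y: "y \<in> pure_comm c" and f: "f \<in> carrier G"
  shows "comm G y f \<in> pure_comm (Suc c) <#> mixed_comm (Suc c)"
proof -
  let ?M = "pure_comm (Suc c) <#> mixed_comm (Suc c)"
  have y_carrier: "y \<in> carrier G" using y pure_comm_subset_F2 subgroup.subset[OF F2_subgroup] by blast
  have "F1 \<union> F2 \<subseteq> {f \<in> carrier G. comm G y f \<in> ?M}"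
  proof
    fix g assume g: "g \<in> F1 \<union> F2"
    have "comm G y g \<in> ?M"
    proof (cases "g \<in> F1")
      case True
      then have "comm G y g \<in> mixed_comm (Suc c)" by (rule comm_pure_F1_in_mixed[OF y])
      then show ?thesis
        using subset_set_mult_right[OF pure_comm_subgroup] subgroup.subset[OF normal_imp_subgroup[OF mixed_comm_normal]]
        by blast
    next
      case False
      then have "comm G y g \<in> pure_comm (Suc c)" using y g by (simp add: comm_subgroup_incl)
      then show ?thesis
        using subset_set_mult_left[OF normal_imp_subgroup[OF mixed_comm_normal]] subgroup.subset[OF pure_comm_subgroup]
        by blast
    qed
    then show "g \<in> {f \<in> carrier G. comm G y f \<in> ?M}" using g factors_carrier by blast
  qed
  then have "carrier G \<subseteq> {f \<in> carrier G. comm G y f \<in> ?M}"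
    by (rule carrier_subset_if_factors[OF subgroup_comm_right_in[OF pure_mixed_normal y_carrier]])
  then show ?thesis using f by blast
qed

lemma rel_comm_iter_R2_subset: "rel_comm_iter G R2 (carrier G) c \<subseteq> pure_comm c <#> mixed_comm c"
proof (induction c)
  case 0
  show ?case
    using subset_set_mult_left[OF normal_imp_subgroup[OF mixed_comm_normal]] R2_subset_F2
      subgroup.subset[OF F2_subgroup] by auto
next
  case (Suc c)
  have "comm_subgroup G (rel_comm_iter G R2 (carrier G) c) (carrier G) \<subseteq> pure_comm (Suc c) <#> mixed_comm (Suc c)"
  proof (rule comm_subgroup_minimal[OF normal_imp_subgroup[OF pure_mixed_normal]])
    fix x f assume "x \<in> rel_comm_iter G R2 (carrier G) c" and f: "f \<in> carrier G"
    then obtain y p where yp: "y \<in> pure_comm c" "p \<in> mixed_comm c" "x = y \<otimes> p"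
      using Suc.IH by (blast elim: set_mult_memE)
    have y: "y \<in> carrier G" using yp(1) pure_comm_subset_F2 subgroup.subset[OF F2_subgroup] by blast
    have p: "p \<in> carrier G" using yp(2) subgroup.mem_carrier[OF normal_imp_subgroup[OF mixed_comm_normal]] by blast
    have "comm G x f = inv p \<otimes> comm G y f \<otimes> p \<otimes> comm G p f"
      using comm_mult_left[OF y p f] yp(3) by simp
    moreover have "inv p \<otimes> comm G y f \<otimes> p \<in> pure_comm (Suc c) <#> mixed_comm (Suc c)"
      using normal.inv_op_closed1[OF pure_mixed_normal p comm_pure_in_pure_mixed[OF yp(1) f]] .
    moreover have "comm G p f \<in> pure_comm (Suc c) <#> mixed_comm (Suc c)"
      using comm_mixed_in_mixed[OF yp(2) f] subset_set_mult_right[OF pure_comm_subgroup]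
        subgroup.subset[OF normal_imp_subgroup[OF mixed_comm_normal]] by blast
    ultimately show "comm G x f \<in> pure_comm (Suc c) <#> mixed_comm (Suc c)"
      using subgroup.m_closed[OF normal_imp_subgroup[OF pure_mixed_normal]] by simp
  qed
  then show ?case by simp
qed

lemma rel_comm_iter_R2_S:
  "rel_comm_iter G (R2 <#> S) (carrier G) (Suc c)
   = pure_comm (Suc c) <#> mixed_comm (Suc c) <#> rel_comm_iter G S (carrier G) (Suc c)"
  (is "?lhs = ?rhs")
proof
  have R2_carrier: "R2 \<subseteq> carrier G" using R2_subset_F2 subgroup.subset[OF F2_subgroup] by blast
  show "?lhs \<subseteq> ?rhs"
    using rel_comm_iter_set_mult_normal_subset[OF R2_carrier S_normal]
      mono_set_mult[OF rel_comm_iter_R2_subset subset_refl] by blast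
  have lhs: "?lhs \<lhd> G" by (rule rel_comm_iter_normal[OF R2_S_normal])
  have R2_RS: "R2 \<subseteq> R2 <#> S" by (rule subset_set_mult_left[OF S_subgroup R2_carrier])
  have S_RS: "S \<subseteq> R2 <#> S" by (rule subset_set_mult_right[OF R2_subgroup subgroup.subset[OF S_subgroup]])
  have "pure_comm (Suc c) \<subseteq> ?lhs"
    by (rule rel_comm_iter_mono[OF R2_RS subgroup.subset[OF F2_subgroup]])
  moreover have "mixed_comm (Suc c) \<subseteq> ?lhs"
    unfolding mixed_comm_def
  proof (rule normal_closure_minimal[OF lhs])
    show "mixed_lcomms (Suc c) \<subseteq> ?lhs"
    proof
      fix u assume "u \<in> mixed_lcomms (Suc c)"
      then obtain r fs where "u = lcomm G r fs" "r \<in> R2" "length fs = Suc c" "set fs \<subseteq> F1 \<union> F2"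
        unfolding mixed_lcomms_def by blast
      then show "u \<in> ?lhs"
        using lcomm_in_rel_comm_iter[of r "R2 <#> S" fs "carrier G" G] R2_RS factors_carrier by auto
    qed
  qed
  moreover have "rel_comm_iter G S (carrier G) (Suc c) \<subseteq> ?lhs"
    by (rule rel_comm_iter_mono[OF S_RS subset_refl])
  ultimately show "?rhs \<subseteq> ?lhs"
    by (intro set_mult_subset_subgroup[OF normal_imp_subgroup[OF lhs]])
qed

lemma set_mult_normal_closures:
  assumes "Q \<subseteq> S" shows "normal_closure G Q <#> normal_closure G R2 <#> S = R2 <#> S"
proof
  have R2_carrier: "R2 \<subseteq> carrier G" using R2_subset_F2 subgroup.subset[OF F2_subgroup] by blast
  have "normal_closure G Q \<subseteq> R2 <#> S"
    using normal_closure_minimal[OF S_normal assms] subset_set_mult_right[OF R2_subgroup subgroup.subset[OF S_subgroup]]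
    by blast
  moreover have "normal_closure G R2 \<subseteq> R2 <#> S"
    by (rule normal_closure_minimal[OF R2_S_normal subset_set_mult_left[OF S_subgroup R2_carrier]])
  moreover have "S \<subseteq> R2 <#> S" by (rule subset_set_mult_right[OF R2_subgroup subgroup.subset[OF S_subgroup]])
  ultimately show "normal_closure G Q <#> normal_closure G R2 <#> S \<subseteq> R2 <#> S"
    by (intro set_mult_subset_subgroup[OF normal_imp_subgroup[OF R2_S_normal]])
  show "R2 <#> S \<subseteq> normal_closure G Q <#> normal_closure G R2 <#> S"
  proof
    fix x assume "x \<in> R2 <#> S"
    then obtain r s where rs: "r \<in> R2" "s \<in> S" "x = r \<otimes> s" by (blast elim: set_mult_memE)
    have "r = \<one> \<otimes> r" using rs(1) R2_carrier by auto
    moreover have "\<one> \<in> normal_closure G Q" by (simp add: normal_closure_def generate.one)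
    moreover have "r \<in> normal_closure G R2" by (rule normal_closure_incl[OF R2_carrier rs(1)])
    ultimately have "r \<in> normal_closure G Q <#> normal_closure G R2" by (metis set_mult_memI)
    then show "x \<in> normal_closure G Q <#> normal_closure G R2 <#> S" using rs by (simp add: set_mult_memI)
  qed
qed

lemma R2_S_Int_lower_central:
  assumes fp: "free_product G F1 F2" and S_F1: "S \<subseteq> normal_closure G F1"
  shows "(R2 <#> S) \<inter> lower_central G (Suc c)
         = (R2 \<inter> lower_central (G\<lparr>carrier := F2\<rparr>) (Suc c)) <#> (S \<inter> lower_central G (Suc c))"
proof -
  obtain \<pi> where \<pi>: "group_hom G G \<pi>" "\<pi> ` carrier G \<subseteq> F2" "\<And>x. x \<in> F2 \<Longrightarrow> \<pi> x = x"
    "\<And>x. x \<in> F1 \<Longrightarrow> \<pi> x = \<one>"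
    using free_product_retraction[OF fp] by blast
  have "normal_closure G F1 \<subseteq> kernel G G \<pi>"
    using \<pi>(4) F1_subgroup subgroup.subset by (intro normal_closure_minimal[OF group_hom.normal_kernel[OF \<pi>(1)]])
      (auto simp: kernel_def)
  then have \<pi>_S: "\<pi> s = \<one>" if "s \<in> S" for s using that S_F1 by (auto simp: kernel_def)
  let ?\<Gamma> = "rel_comm_iter G (carrier G) (carrier G) c" and ?\<Gamma>' = "rel_comm_iter G F2 F2 c"
  have "\<pi> ` ?\<Gamma> = rel_comm_iter G (\<pi> ` carrier G) (\<pi> ` carrier G) c"
    by (rule group_hom.rel_comm_iter_img[OF \<pi>(1) subgroup_self subset_refl])
  also have "\<dots> \<subseteq> ?\<Gamma>'" by (rule rel_comm_iter_mono[OF \<pi>(2) \<pi>(2)])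
  finally have \<pi>_\<Gamma>: "\<pi> ` ?\<Gamma> \<subseteq> ?\<Gamma>'" .
  have "?\<Gamma>' \<subseteq> ?\<Gamma>" by (rule rel_comm_iter_mono) (use subgroup.subset[OF F2_subgroup] in auto)
  moreover have "x \<in> R2 \<Longrightarrow> \<pi> x = x" for x using \<pi>(3) R2_subset_F2 by blast
  moreover have "R2 \<subseteq> carrier G" using R2_subset_F2 subgroup.subset[OF F2_subgroup] by blast
  ultimately have "(R2 <#> S) \<inter> ?\<Gamma> = (R2 \<inter> ?\<Gamma>') <#> (S \<inter> ?\<Gamma>)"
    using set_mult_Int_by_retraction[OF \<pi>(1) _ \<pi>_S rel_comm_iter_subgroup[OF subgroup_self subset_refl]
        \<pi>_\<Gamma> _ _ subgroup.subset[OF S_subgroup]] by blast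
  moreover have "lower_central (G\<lparr>carrier := F2\<rparr>) (Suc c) = ?\<Gamma>'"
    unfolding lower_central_def using comm_iter_subgroup_eq[OF F2_subgroup subset_refl] by simp
  moreover have "lower_central G (Suc c) = ?\<Gamma>"
    by (simp add: lower_central_def comm_iter_eq_rel_comm_iter)
  ultimately show ?thesis by simp
qed

lemma comm_iter_R2_S:
  "comm_iter G (R2 <#> S) (Suc c)
   = comm_iter (G\<lparr>carrier := F2\<rparr>) R2 (Suc c) <#> mixed_comm (Suc c) <#> comm_iter G S (Suc c)"
  unfolding comm_iter_subgroup_eq[OF F2_subgroup R2_subset_F2]
  unfolding comm_iter_eq_rel_comm_iter by (rule rel_comm_iter_R2_S)

end

section \<open>The relators of a semidirect product\<close>

text \<open>\<open>f1'\<close> is \<open>f\<^sub>1\<close> overlined in the paper; the condition says \<open>\<nu>\<^sub>1 f1' = \<theta>(\<nu>\<^sub>2 f\<^sub>2)(\<nu>\<^sub>1 f\<^sub>1)\<close>.\<close>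
definition semidirect_relators ::
  "('f, 'y) monoid_scheme \<Rightarrow> ('g, 'x) monoid_scheme \<Rightarrow> 'f set \<Rightarrow> 'f set \<Rightarrow> ('f \<Rightarrow> 'g) \<Rightarrow> ('f \<Rightarrow> 'g) \<Rightarrow> 'f set"
  where "semidirect_relators F G F1 F2 \<nu>1 \<nu>2 =
    {inv\<^bsub>F\<^esub> f1 \<otimes>\<^bsub>F\<^esub> f1' \<otimes>\<^bsub>F\<^esub> comm F f2 f1 | f1 f1' f2.
       f1 \<in> F1 \<and> f1' \<in> F1 \<and> f2 \<in> F2 \<and> \<nu>1 f1' = inv\<^bsub>G\<^esub> (\<nu>2 f2) \<otimes>\<^bsub>G\<^esub> \<nu>1 f1 \<otimes>\<^bsub>G\<^esub> \<nu>2 f2}"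

context group
begin

lemma kernel_subset_semidirect_relators:
  assumes "subgroup F1 G" "subgroup F2 G"
    and "group_hom (G\<lparr>carrier := F1\<rparr>) H \<nu>1" "group_hom (G\<lparr>carrier := F2\<rparr>) H \<nu>2"
  shows "kernel (G\<lparr>carrier := F1\<rparr>) H \<nu>1 \<subseteq> semidirect_relators G H F1 F2 \<nu>1 \<nu>2"
proof
  interpret H: group H by (rule group_hom.axioms(2)[OF assms(3)])
  fix x assume "x \<in> kernel (G\<lparr>carrier := F1\<rparr>) H \<nu>1"
  then have x: "x \<in> F1" "\<nu>1 x = \<one>\<^bsub>H\<^esub>" by (auto simp: kernel_def)
  have "\<nu>1 \<one> = \<one>\<^bsub>H\<^esub>" "\<nu>2 \<one> = \<one>\<^bsub>H\<^esub>"
    using group_hom.hom_one[OF assms(3)] group_hom.hom_one[OF assms(4)] by simp_all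
  moreover have "x = inv \<one> \<otimes> x \<otimes> comm G \<one> \<one>" using x(1) subgroup.mem_carrier[OF assms(1)] by simp
  moreover have "\<one> \<in> F1" "\<one> \<in> F2" using assms(1,2) subgroup.one_closed by auto
  ultimately have "\<nu>1 x = inv\<^bsub>H\<^esub> (\<nu>2 \<one>) \<otimes>\<^bsub>H\<^esub> \<nu>1 \<one> \<otimes>\<^bsub>H\<^esub> \<nu>2 \<one>"
    and "x = inv \<one> \<otimes> x \<otimes> comm G \<one> \<one>" and "\<one> \<in> F1" "\<one> \<in> F2"
    using x(2) by simp_all
  then show "x \<in> semidirect_relators G H F1 F2 \<nu>1 \<nu>2"
    unfolding semidirect_relators_def using x(1) by blast
qed

lemma comm_kernel_in_semidirect_relators:
  assumes "subgroup F1 G" "subgroup F2 G"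
    and "group_hom (G\<lparr>carrier := F1\<rparr>) H \<nu>1" "group_hom (G\<lparr>carrier := F2\<rparr>) H \<nu>2"
    and r: "r \<in> kernel (G\<lparr>carrier := F2\<rparr>) H \<nu>2" and f: "f \<in> F1"
  shows "comm G r f \<in> semidirect_relators G H F1 F2 \<nu>1 \<nu>2"
proof -
  interpret H: group H by (rule group_hom.axioms(2)[OF assms(3)])
  have r': "r \<in> F2" "\<nu>2 r = \<one>\<^bsub>H\<^esub>" using r by (auto simp: kernel_def)
  have "\<nu>1 f \<in> carrier H" using group_hom.hom_closed[OF assms(3)] f by simp
  then have "\<nu>1 f = inv\<^bsub>H\<^esub> (\<nu>2 r) \<otimes>\<^bsub>H\<^esub> \<nu>1 f \<otimes>\<^bsub>H\<^esub> \<nu>2 r"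
    using r'(2) by simp
  moreover have "comm G r f = inv f \<otimes> f \<otimes> comm G r f"
    using subgroup.mem_carrier[OF assms(1) f] subgroup.mem_carrier[OF assms(2) r'(1)] by simp
  ultimately show ?thesis unfolding semidirect_relators_def using f r'(1) by blast
qed

lemma semidirect_relators_subset_normal_closure:
  assumes F1: "subgroup F1 G" and F2: "F2 \<subseteq> carrier G"
  shows "semidirect_relators G H F1 F2 \<nu>1 \<nu>2 \<subseteq> normal_closure G F1"
proof
  let ?N = "normal_closure G F1"
  have N: "?N \<lhd> G" by (rule normal_closure_normal[OF subgroup.subset[OF F1]])
  have F1_N: "x \<in> ?N" if "x \<in> F1" for x by (rule normal_closure_incl[OF subgroup.subset[OF F1] that])
  fix z assume "z \<in> semidirect_relators G H F1 F2 \<nu>1 \<nu>2"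
  then obtain f1 f1' f2 where z: "z = inv f1 \<otimes> f1' \<otimes> comm G f2 f1" "f1 \<in> F1" "f1' \<in> F1" "f2 \<in> F2"
    unfolding semidirect_relators_def by blast
  have carr: "f1 \<in> carrier G" "f2 \<in> carrier G" using z F2 subgroup.mem_carrier[OF F1] by auto
  have "comm G f2 f1 = (inv f2 \<otimes> inv f1 \<otimes> f2) \<otimes> f1" by (simp add: comm_def)
  moreover have "inv f2 \<otimes> inv f1 \<otimes> f2 \<in> ?N"
    using normal.inv_op_closed1[OF N carr(2) F1_N[OF subgroup.m_inv_closed[OF F1 z(2)]]] .
  ultimately have "comm G f2 f1 \<in> ?N"
    using F1_N[OF z(2)] subgroup.m_closed[OF normal_imp_subgroup[OF N]] by simp
  then show "z \<in> ?N"
    using z F1_N subgroup.m_closed[OF normal_imp_subgroup[OF N]] subgroup.m_inv_closed[OF F1] by simp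
qed

lemma normal_closure_semidirect_relators:
  assumes F: "subgroup F1 G" "subgroup F2 G"
    and \<nu>: "group_hom (G\<lparr>carrier := F1\<rparr>) H \<nu>1" "group_hom (G\<lparr>carrier := F2\<rparr>) H \<nu>2"
  defines "S \<equiv> normal_closure G (semidirect_relators G H F1 F2 \<nu>1 \<nu>2)"
  shows "S \<lhd> G" "S \<subseteq> normal_closure G F1"
    "kernel (G\<lparr>carrier := F1\<rparr>) H \<nu>1 \<subseteq> S" "comm_subgroup G (kernel (G\<lparr>carrier := F2\<rparr>) H \<nu>2) F1 \<subseteq> S"
proof -
  let ?Rel = "semidirect_relators G H F1 F2 \<nu>1 \<nu>2"
  have F1_closure: "normal_closure G F1 \<lhd> G" by (rule normal_closure_normal[OF subgroup.subset[OF F(1)]])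
  have Rel_F1: "?Rel \<subseteq> normal_closure G F1"
    by (rule semidirect_relators_subset_normal_closure[OF F(1) subgroup.subset[OF F(2)]])
  then have Rel_carrier: "?Rel \<subseteq> carrier G"
    using subgroup.subset[OF normal_imp_subgroup[OF F1_closure]] by blast
  show S: "S \<lhd> G" unfolding S_def by (rule normal_closure_normal[OF Rel_carrier])
  show "S \<subseteq> normal_closure G F1" unfolding S_def by (rule normal_closure_minimal[OF F1_closure Rel_F1])
  show "kernel (G\<lparr>carrier := F1\<rparr>) H \<nu>1 \<subseteq> S"
    unfolding S_def using kernel_subset_semidirect_relators[OF F \<nu>] normal_closure_incl[OF Rel_carrier]
    by blast
  show "comm_subgroup G (kernel (G\<lparr>carrier := F2\<rparr>) H \<nu>2) F1 \<subseteq> S"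
    using comm_subgroup_minimal[OF normal_imp_subgroup[OF S]] comm_kernel_in_semidirect_relators[OF F \<nu>]
      normal_closure_incl[OF Rel_carrier]
    unfolding S_def by blast
qed

end

theorem theorem2p1:
  fixes G :: "('g, 'x) monoid_scheme" and F :: "('f, 'y) monoid_scheme"
    and A B :: "'g set" and F1 F2 :: "'f set"
    and \<nu>1 \<nu>2 :: "'f \<Rightarrow> 'g"
  assumes G: "group G"
    and A_normal: "A \<lhd> G" and B_sub: "subgroup B G"
    and AB_trivial: "A \<inter> B = {\<one>\<^bsub>G\<^esub>}"
    and AB_gen: "generate G (A \<union> B) = carrier G"
    and freeprod: "free_product F F1 F2"
    and F1_free: "free_group (F\<lparr>carrier := F1\<rparr>)"
    and F2_free: "free_group (F\<lparr>carrier := F2\<rparr>)"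
    and nu1_hom: "\<nu>1 \<in> hom (F\<lparr>carrier := F1\<rparr>) G" and nu1_onto: "\<nu>1 ` F1 = A"
    and nu2_hom: "\<nu>2 \<in> hom (F\<lparr>carrier := F2\<rparr>) G" and nu2_onto: "\<nu>2 ` F2 = B"
  defines "R1 \<equiv> kernel (F\<lparr>carrier := F1\<rparr>) G \<nu>1"
    and "R2 \<equiv> kernel (F\<lparr>carrier := F2\<rparr>) G \<nu>2"
    and "S \<equiv> normal_closure F
           {inv\<^bsub>F\<^esub> f1 \<otimes>\<^bsub>F\<^esub> f1' \<otimes>\<^bsub>F\<^esub> comm F f2 f1 | f1 f1' f2.
              f1 \<in> F1 \<and> f1' \<in> F1 \<and> f2 \<in> F2 \<and>
              \<nu>1 f1' = inv\<^bsub>G\<^esub> (\<nu>2 f2) \<otimes>\<^bsub>G\<^esub> \<nu>1 f1 \<otimes>\<^bsub>G\<^esub> \<nu>2 f2}"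
  defines "R \<equiv> normal_closure F R1 <#>\<^bsub>F\<^esub> normal_closure F R2 <#>\<^bsub>F\<^esub> S"
    and "PR \<equiv> (\<lambda>c. normal_closure F
           {lcomm F r2 fs | r2 fs. r2 \<in> R2 \<and> length fs = c \<and> set fs \<subseteq> F1 \<union> F2 \<and>
                                 (\<exists>f \<in> set fs. f \<in> F1)})"
  shows "(R1 \<subseteq> S \<and> comm_subgroup F R2 F1 \<subseteq> S)
         \<and> R = R2 <#>\<^bsub>F\<^esub> S
         \<and> (\<forall>c\<ge>1. R \<inter> lower_central F (c + 1) =
               (R2 \<inter> lower_central (F\<lparr>carrier := F2\<rparr>) (c + 1)) <#>\<^bsub>F\<^esub> (S \<inter> lower_central F (c + 1)))
         \<and> (\<forall>c\<ge>1. comm_iter F R c =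
               comm_iter (F\<lparr>carrier := F2\<rparr>) R2 c <#>\<^bsub>F\<^esub> PR c <#>\<^bsub>F\<^esub> comm_iter F S c)"
proof -
  have F: "group F" "subgroup F1 F" "subgroup F2 F" "generate F (F1 \<union> F2) = carrier F"
    using freeprod by (auto simp: free_product_def)
  interpret F: group F by (rule F(1))
  have hom1: "group_hom (F\<lparr>carrier := F1\<rparr>) G \<nu>1" and hom2: "group_hom (F\<lparr>carrier := F2\<rparr>) G \<nu>2"
    using F nu1_hom nu2_hom G
    by (auto intro!: group_hom.intro group_hom_axioms.intro subgroup.subgroup_is_group)
  have S: "S \<lhd> F" "S \<subseteq> normal_closure F F1" "R1 \<subseteq> S" "comm_subgroup F R2 F1 \<subseteq> S"
    using F.normal_closure_semidirect_relators[OF F(2,3) hom1 hom2]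
    unfolding S_def R1_def R2_def semidirect_relators_def by auto
  interpret factor_relators F F1 F2 R2 S
    using factor_relators.intro[OF generated_by_factors.intro[OF F(1) generated_by_factors_axioms.intro[OF F(2-4)]]
        factor_relators_axioms.intro[OF group_hom.normal_kernel[OF hom2] S(1)]] S(4)
    unfolding R2_def by blast
  have R: "R = R2 <#>\<^bsub>F\<^esub> S" unfolding R_def by (rule set_mult_normal_closures[OF S(3)])
  have PR: "PR = mixed_comm" unfolding PR_def mixed_comm_def mixed_lcomms_def ..
  show ?thesis
    using S(3,4) R R2_S_Int_lower_central[OF freeprod S(2)] comm_iter_R2_S
    by (auto simp: PR dest!: Suc_le_D)
qed

end
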